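(* In the setting described in the context, let $\kappa_1>0$ be the smallest eigenvalue of $\Gamma^{1/2}$, let $b_1>0$ be the smallest eigenvalue of $\Gamma^{-1/2}A\Gamma^{-1/2}$, and set $C_0:=m^2\rho^{-1}\max\{\Phi,1,2\Delta/(\kappa_1^2 b_1)\}$. Then there exist constants $K_0,K_1>0$, independent of $B,\varepsilon,\zeta,k,\nu$, such that for every $B\in(0,C_0)$ there exist $\bar\varepsilon>0$ and $\bar\zeta>0$ with the following property: for all real $\varepsilon$ with $|\varepsilon|<\bar\varepsilon$, all $\zeta\in\mathbb{R}^m$ with $|\zeta|<\bar\zeta$, all $k\ge1$ and all $\nu\in\mathbb{Z}^d\setminus\{0\}$, $$|u^{(k)}_\nu|\le B_0B_1^k e^{-\xi|\nu|/2},\qquad B_0:=K_0B,\quad B_1:=K_1B.$$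
   Context: Setting: $m,d\ge1$; $\omega\in\mathbb{R}^d$ has rationally independent components ($\omega\cdot\nu\neq0$ for all $\nu\in\mathbb{Z}^d\setminus\{0\}$); $\Gamma$ is a real symmetric positive definite $m\times m$ matrix; $V:\mathbb{R}^m\to\mathbb{R}$ is real analytic and $g=\partial V/\partial x$; $f:\mathbb{T}^d\to\mathbb{R}^m$ is real analytic with Fourier coefficients $f_\nu$. The point $c\in\mathbb{R}^m$ satisfies $g(c)=f_0$ and the Hessian $A:=\frac{\partial^2V}{\partial x^2}(c)$ is positive definite. Constants $\xi>0,\Phi>0$ satisfy $|(f_\nu)_i|\le\Phi e^{-\xi|\nu|}$ for all $\nu\in\mathbb{Z}^d$, $i=1,\dots,m$. For $p\ge0$, $G_p(c)$ is the tensor with components $[G_p(c)]_{i,i_1,\dots,i_p}=\frac1{p!}\frac{\partial^pg_i}{\partial x_{i_1}\cdots\partial x_{i_p}}(c)$, and constants $\rho>0,\Delta>0$ satisfy $|[G_p(c)]_{i,i_1,\dots,i_p}|\le\Delta\rho^{-p}$ for all $p,i,i_1,\dots,i_p$. For vectors $y_1,\dots,y_p\in\mathbb{C}^m$, $G_p(c)y_1\cdots y_p$ denotes the vector with components $\sum_{i_1,\dots,i_p}[G_p(c)]_{i,i_1,\dots,i_p}(y_1)_{i_1}\cdots(y_p)_{i_p}$. For $\varepsilon,s\in\mathbb{R}$ let $D(\varepsilon,s):=-\varepsilon s^2\mathbb{1}+is\Gamma+\varepsilon A$. For $\zeta\in\mathbb{R}^m$ and real $\varepsilon$, the vectors $u^{(k)}_\nu\in\mathbb{C}^m$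 ($k\ge1$, $\nu\in\mathbb{Z}^d$) are defined recursively by $u^{(1)}_0=\zeta$, $u^{(k)}_0=0$ for $k\ge2$, and for $\nu\ne0$: $D(\varepsilon,\omega\cdot\nu)u^{(1)}_\nu=\varepsilon f_\nu$ and, for $k\ge2$, $$D(\varepsilon,\omega\cdot\nu)u^{(k)}_\nu=-\varepsilon\sum_{p\ge2}\ \sum_{\substack{k_1,\dots,k_p\ge1\\k_1+\dots+k_p=k-1}}\ \sum_{\substack{\nu_1,\dots,\nu_p\in\mathbb{Z}^d\\\nu_1+\dots+\nu_p=\nu}}G_p(c)u^{(k_1)}_{\nu_1}\cdots u^{(k_p)}_{\nu_p}$$ (empty sums are zero). $|\cdot|$ denotes the Euclidean norm on $\mathbb{C}^m$ and on $\mathbb{Z}^d$ as appropriate. *)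

theory Defs
  imports "HOL-Analysis.Analysis" "HOL-Library.Multiset"
begin

text \<open>Vectors of R^m / C^m are indexed by a finite type 'm (m = CARD('m)),
  lattice vectors nu in Z^d are int^'d (d = CARD('d)).\<close>

definition dotZ :: "real^'d \<Rightarrow> int^'d \<Rightarrow> real" where
  "dotZ \<omega> \<nu> = (\<Sum>i\<in>UNIV. \<omega>$i * real_of_int (\<nu>$i))"

definition normZ :: "int^'d \<Rightarrow> real" where
  "normZ \<nu> = norm ((\<chi> i. real_of_int (\<nu>$i)) :: real^'d)"

definition pos_def_mat :: "real^'m^'m \<Rightarrow> bool" where
  "pos_def_mat M \<longleftrightarrow> transpose M = M \<and> (\<forall>v. v \<noteq> 0 \<longrightarrow> v \<bullet> (M *v v) > 0)"

definition matrix_sqrt :: "real^'m^'m \<Rightarrow> real^'m^'m" where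
  "matrix_sqrt M = (THE S. pos_def_mat S \<and> S ** S = M)"

definition min_eig :: "real^'m^'m \<Rightarrow> real" where
  "min_eig M = Inf {e. \<exists>v::real^'m. v \<noteq> 0 \<and> M *v v = e *\<^sub>R v}"

definition Dmat :: "real^'m^'m \<Rightarrow> real^'m^'m \<Rightarrow> real \<Rightarrow> real \<Rightarrow> complex^'m^'m" where
  "Dmat \<Gamma> A \<epsilon> s = (\<chi> i j. complex_of_real (- \<epsilon> * s^2 * (if i = j then 1 else 0) + \<epsilon> * A$i$j)
                         + \<i> * complex_of_real (s * \<Gamma>$i$j))"

text \<open>The tensor G_p(c) is encoded by G :: 'm => 'm list => real:
  [G_p(c)]_{i,i_1,...,i_p} = G i [i_1,...,i_p]  (lists of length p).
  Gapply G p ys is the vector G_p(c) y_0 ... y_(p-1).\<close>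
definition Gapply :: "('m \<Rightarrow> 'm list \<Rightarrow> real) \<Rightarrow> nat \<Rightarrow> (nat \<Rightarrow> complex^'m) \<Rightarrow> complex^'m" where
  "Gapply G p ys = (\<chi> i. \<Sum>xs\<in>{xs. length xs = p}.
      complex_of_real (G i xs) * (\<Prod>j<p. ys j $ (xs ! j)))"

definition comps :: "nat \<Rightarrow> nat \<Rightarrow> (nat \<Rightarrow> nat) set" where
  "comps p n = {ks. ks \<in> PiE {..<p} (\<lambda>_. {1..}) \<and> (\<Sum>j<p. ks j) = n}"

definition splits :: "nat \<Rightarrow> int^'d \<Rightarrow> (nat \<Rightarrow> int^'d) set" where
  "splits p \<nu> = {\<nu>s. \<nu>s \<in> PiE {..<p} (\<lambda>_. UNIV) \<and> (\<Sum>j<p. \<nu>s j) = \<nu>}"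

text \<open>One step of the recursion: computes u^(k)_nu from the previously
  computed u^(k') (k' < k), given as h.\<close>
definition ustep ::
  "real^'m^'m \<Rightarrow> real^'m^'m \<Rightarrow> real^'d \<Rightarrow> (int^'d \<Rightarrow> complex^'m) \<Rightarrow> ('m \<Rightarrow> 'm list \<Rightarrow> real)
   \<Rightarrow> real \<Rightarrow> real^'m \<Rightarrow> (nat \<Rightarrow> int^'d \<Rightarrow> complex^'m) \<Rightarrow> nat \<Rightarrow> int^'d \<Rightarrow> complex^'m" where
  "ustep \<Gamma> A \<omega> f G \<epsilon> \<zeta> h k \<nu> =
     (if \<nu> = 0 then (if k = 1 then (\<chi> i. complex_of_real (\<zeta>$i)) else 0)
      else matrix_inv (Dmat \<Gamma> A \<epsilon> (dotZ \<omega> \<nu>)) *v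
        (if k = 1 then complex_of_real \<epsilon> *s f \<nu>
         else (- complex_of_real \<epsilon>) *s
           (\<Sum>p\<in>{2..k-1}. \<Sum>ks\<in>comps p (k-1).
               infsum (\<lambda>\<nu>s. Gapply G p (\<lambda>j. h (ks j) (\<nu>s j))) (splits p \<nu>))))"

primrec uhist ::
  "real^'m^'m \<Rightarrow> real^'m^'m \<Rightarrow> real^'d \<Rightarrow> (int^'d \<Rightarrow> complex^'m) \<Rightarrow> ('m \<Rightarrow> 'm list \<Rightarrow> real)
   \<Rightarrow> real \<Rightarrow> real^'m \<Rightarrow> nat \<Rightarrow> nat \<Rightarrow> int^'d \<Rightarrow> complex^'m" where
  "uhist \<Gamma> A \<omega> f G \<epsilon> \<zeta> 0 = (\<lambda>_ _. 0)"
| "uhist \<Gamma> A \<omega> f G \<epsilon> \<zeta> (Suc n) =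
     (uhist \<Gamma> A \<omega> f G \<epsilon> \<zeta> n)(Suc n := ustep \<Gamma> A \<omega> f G \<epsilon> \<zeta> (uhist \<Gamma> A \<omega> f G \<epsilon> \<zeta> n) (Suc n))"

text \<open>u^(k)_nu (for k >= 1).\<close>
definition useq ::
  "real^'m^'m \<Rightarrow> real^'m^'m \<Rightarrow> real^'d \<Rightarrow> (int^'d \<Rightarrow> complex^'m) \<Rightarrow> ('m \<Rightarrow> 'm list \<Rightarrow> real)
   \<Rightarrow> real \<Rightarrow> real^'m \<Rightarrow> nat \<Rightarrow> int^'d \<Rightarrow> complex^'m" where
  "useq \<Gamma> A \<omega> f G \<epsilon> \<zeta> k = uhist \<Gamma> A \<omega> f G \<epsilon> \<zeta> k k"

end

theory Submission
  imports Defs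
begin

(* The coefficients are measured in the weighted norm sum_nu |u_nu| e^(a |nu|) with a = xi/2.
   Since |nu| is subadditive, this norm is submultiplicative on the convolutions in the
   recursion, and eps D(eps, s)^-1 is bounded uniformly in s (coercivity of A for small s,
   of Gamma for large s).  The norms N_k of u^(k) then obey a scalar recursion, for which the
   ansatz N_k <= Q R^k / k^2 closes when Q is small and R large, because
   sum over compositions k_1 + ... + k_p = n of prod 1/k_j^2 is at most 8^p / n^2.
   The start N_1 <= Q R is obtained by taking eps and zeta small: off a finite set of
   frequencies the tail of f is small, and on that set the divisors omega.nu are bounded
   away from 0.  The bound therefore holds for every B > 0, with K_0 = K_1 = 1. *)

lemma summable_on_prod_PiE_nonneg:
  fixes f :: "'a \<Rightarrow> 'b \<Rightarrow> real"
  assumes "finite A" "\<And>x. x \<in> A \<Longrightarrow> f x summable_on B x" "\<And>x y. f x y \<ge> 0"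
  shows "(\<lambda>g. \<Prod>x\<in>A. f x (g x)) summable_on PiE A B"
  using assms(1,2)
proof (induction A rule: finite_induct)
  case empty
  then show ?case by simp
next
  case (insert x A)
  have PiE_insert: "PiE (insert x A) B = (\<lambda>(g,y). g(x:=y)) ` (PiE A B \<times> B x)"
    unfolding PiE_insert_eq
    by (subst swap_product [symmetric]) (simp add: image_image case_prod_unfold)
  have inj: "inj_on (\<lambda>(g, y). g(x := y)) (PiE A B \<times> B x)"
    using \<open>x \<notin> A\<close> by (rule inj_combinator')
  have split_prod: "(\<lambda>g. \<Prod>x\<in>insert x A. f x (g x)) \<circ> (\<lambda>(g,y). g(x:=y)) =
      (\<lambda>(p, y). f x y * (\<Prod>x'\<in>A. f x' (p x')))"
  proof -
    have "(\<Prod>x'\<in>A. f x' ((p(x:=y)) x')) = (\<Prod>x'\<in>A. f x' (p x'))" for p y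
      by (rule prod.cong) (use insert.hyps in auto)
    then have "(\<Prod>x'\<in>insert x A. f x' ((p(x:=y)) x')) = f x y * (\<Prod>x'\<in>A. f x' (p x'))" for p y
      using insert.hyps by (simp del: fun_upd_apply) simp
    then show ?thesis by (simp add: fun_eq_iff case_prod_unfold del: fun_upd_apply)
  qed
  have fx: "f x summable_on B x" using insert by auto
  have "(\<lambda>(p, y). f x y * (\<Prod>x'\<in>A. f x' (p x'))) summable_on PiE A B \<times> B x"
  proof (rule summable_on_SigmaI[where g="\<lambda>p. infsum (f x) (B x) * (\<Prod>x'\<in>A. f x' (p x'))"])
    show "(\<lambda>p. infsum (f x) (B x) * (\<Prod>x'\<in>A. f x' (p x'))) summable_on PiE A B"
      using insert by (intro summable_on_cmult_right) auto
  qed (use has_sum_cmult_left[OF has_sum_infsum[OF fx]] assms(3) in \<open>auto simp: prod_nonneg\<close>)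
  then show ?case
    unfolding PiE_insert using inj by (subst summable_on_reindex) (auto simp: split_prod)
qed

lemma summable_on_exp_neg_abs_int:
  assumes "c > 0"
  shows "(\<lambda>n::int. exp (- c * \<bar>real_of_int n\<bar>)) summable_on UNIV"
proof -
  have nat: "(\<lambda>n::nat. exp (- c * real n)) summable_on UNIV"
  proof -
    have "summable (\<lambda>n::nat. exp (- c) ^ n)"
      using assms by (intro summable_geometric) simp
    then show ?thesis
      by (subst summable_on_UNIV_nonneg_real_iff) (auto simp: exp_of_nat_mult[symmetric] mult.commute)
  qed
  have "UNIV = range int \<union> range (\<lambda>n. - int n - 1)"
    by (auto simp: image_iff) presburger
  moreover have "(\<lambda>n::int. exp (- c * \<bar>real_of_int n\<bar>)) summable_on range int"
    using nat by (subst summable_on_reindex) (auto simp: o_def)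
  moreover have "(\<lambda>n::int. exp (- c * \<bar>real_of_int n\<bar>)) summable_on range (\<lambda>n. - int n - 1)"
  proof (subst summable_on_reindex)
    have "exp (- c * \<bar>real_of_int (- int n - 1)\<bar>) = exp (- c) * exp (- c * real n)" for n
      by (simp add: exp_add[symmetric] algebra_simps)
    then show "((\<lambda>n::int. exp (- c * \<bar>real_of_int n\<bar>)) \<circ> (\<lambda>n. - int n - 1)) summable_on UNIV"
      using summable_on_cmult_right[OF nat, of "exp (- c)"] by (simp add: o_def)
  qed (auto simp: inj_def)
  ultimately show ?thesis by (metis summable_on_union)
qed

lemma normZ_nonneg: "normZ \<nu> \<ge> 0"
  by (simp add: normZ_def)

lemma normZ_zero [simp]: "normZ (0::int^'d) = 0"
  by (simp add: normZ_def vec_eq_iff)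

lemma abs_nth_le_normZ: "\<bar>real_of_int (\<nu> $ i)\<bar> \<le> normZ \<nu>"
  unfolding normZ_def using component_le_norm_cart[of "\<chi> i. real_of_int (\<nu> $ i)" i] by simp

lemma normZ_sum_le: "normZ (\<Sum>j\<in>J. (\<nu>s j :: int^'d)) \<le> (\<Sum>j\<in>J. normZ (\<nu>s j))"
proof -
  have "((\<chi> i. real_of_int ((\<Sum>j\<in>J. \<nu>s j) $ i)) :: real^'d) = (\<Sum>j\<in>J. \<chi> i. real_of_int (\<nu>s j $ i))"
    by (simp add: vec_eq_iff)
  then show ?thesis unfolding normZ_def by (simp add: norm_sum)
qed

lemma summable_on_exp_neg_normZ:
  assumes "b > 0"
  shows "(\<lambda>\<nu>::int^'d. exp (- b * normZ \<nu>)) summable_on UNIV"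
proof -
  define c where "c = b / real CARD('d)"
  have c: "c > 0" using assms by (simp add: c_def)
  define h where "h = (\<lambda>n::int. exp (- c * \<bar>real_of_int n\<bar>))"
  have "(\<lambda>g::'d \<Rightarrow> int. \<Prod>i\<in>UNIV. h (g i)) summable_on PiE UNIV (\<lambda>_. UNIV)"
    using summable_on_exp_neg_abs_int[OF c] by (intro summable_on_prod_PiE_nonneg) (auto simp: h_def)
  then have "(\<lambda>\<nu>::int^'d. \<Prod>i\<in>UNIV. h (\<nu> $ i)) summable_on range vec_lambda"
    by (subst summable_on_reindex) (auto simp: inj_def vec_lambda_inject o_def)
  then have prod_summable: "(\<lambda>\<nu>::int^'d. \<Prod>i\<in>UNIV. h (\<nu> $ i)) summable_on UNIV"
    by (metis surj_def vec_nth_inverse)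
  show ?thesis
  proof (rule summable_on_comparison_test[OF prod_summable])
    fix \<nu> :: "int^'d"
    have "c * (\<Sum>i\<in>UNIV. \<bar>real_of_int (\<nu> $ i)\<bar>) \<le> c * (\<Sum>i\<in>(UNIV::'d set). normZ \<nu>)"
      using c by (intro mult_left_mono sum_mono abs_nth_le_normZ) auto
    also have "\<dots> = b * normZ \<nu>" by (simp add: c_def)
    finally have "exp (- b * normZ \<nu>) \<le> exp (- (c * (\<Sum>i\<in>UNIV. \<bar>real_of_int (\<nu> $ i)\<bar>)))"
      by simp
    also have "\<dots> = (\<Prod>i\<in>UNIV. h (\<nu> $ i))"
      by (simp add: h_def exp_sum[symmetric] sum_distrib_left sum_negf)
    finally show "exp (- b * normZ \<nu>) \<le> (\<Prod>i\<in>UNIV. h (\<nu> $ i))" .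
  qed simp
qed

lemma has_sum_sum:
  fixes f :: "'i \<Rightarrow> 'a \<Rightarrow> 'b::topological_comm_monoid_add"
  assumes "finite I" "\<And>i. i \<in> I \<Longrightarrow> (f i has_sum s i) A"
  shows "((\<lambda>x. \<Sum>i\<in>I. f i x) has_sum (\<Sum>i\<in>I. s i)) A"
  using assms by (induction I rule: finite_induct) (auto intro!: has_sum_add)

lemma summable_on_splits_prod:
  fixes g :: "nat \<Rightarrow> int^'d \<Rightarrow> real"
  assumes "\<And>j. j < p \<Longrightarrow> g j summable_on UNIV" "\<And>j \<mu>. g j \<mu> \<ge> 0"
  shows "(\<lambda>\<nu>s. \<Prod>j<p. g j (\<nu>s j)) summable_on splits p \<nu>"
proof (rule summable_on_subset_banach)
  show "(\<lambda>\<nu>s. \<Prod>j<p. g j (\<nu>s j)) summable_on PiE {..<p} (\<lambda>_. UNIV)"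
    using assms by (intro summable_on_prod_PiE_nonneg) auto
qed (auto simp: splits_def)

text \<open>Summing the convolution over all \<open>\<nu>\<close> regroups the product over
  all tuples, so the sum factorises.\<close>

lemma has_sum_infsum_splits_prod:
  fixes g :: "nat \<Rightarrow> int^'d \<Rightarrow> real"
  assumes summable: "\<And>j. j < p \<Longrightarrow> g j summable_on UNIV" and nonneg: "\<And>j \<mu>. g j \<mu> \<ge> 0"
  shows "((\<lambda>\<nu>. infsum (\<lambda>\<nu>s. \<Prod>j<p. g j (\<nu>s j)) (splits p \<nu>)) has_sum (\<Prod>j<p. infsum (g j) UNIV)) UNIV"
proof -
  define F where "F = (\<lambda>\<nu>s. \<Prod>j<p. g j (\<nu>s j))"
  have F_summable: "F summable_on PiE {..<p} (\<lambda>_. UNIV)"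
    unfolding F_def using assms by (intro summable_on_prod_PiE_nonneg) auto
  have inj: "inj_on snd (Sigma (UNIV::(int^'d) set) (splits p))"
    by (auto simp: inj_on_def splits_def)
  have img: "snd ` Sigma (UNIV::(int^'d) set) (splits p) = PiE {..<p} (\<lambda>_. UNIV)"
    by (auto simp: splits_def image_iff)
  have "(F has_sum (\<Prod>j<p. infsum (g j) UNIV)) (PiE {..<p} (\<lambda>_. UNIV))"
    using F_summable infsum_prod_PiE[of "{..<p}" g] summable unfolding F_def by (simp add: has_sum_iff)
  then have "((\<lambda>(\<nu>, \<nu>s). F \<nu>s) has_sum (\<Prod>j<p. infsum (g j) UNIV)) (Sigma UNIV (splits p))"
    using has_sum_reindex[OF inj, of F] img by (simp add: o_def case_prod_unfold)
  then show ?thesis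
    unfolding F_def
    by (rule has_sum_SigmaD) (simp add: summable_on_splits_prod[OF summable nonneg])
qed

lemma comps_subset_PiE: "comps p n \<subseteq> PiE {..<p} (\<lambda>_. {1..n})"
proof
  fix ks assume ks: "ks \<in> comps p n"
  have "ks j \<le> n" if "j < p" for j
    using ks that member_le_sum[of j "{..<p}" ks] by (simp add: comps_def)
  then show "ks \<in> PiE {..<p} (\<lambda>_. {1..n})"
    using ks by (auto simp: comps_def PiE_def Pi_def)
qed

lemma finite_comps: "finite (comps p n)"
  by (rule finite_subset[OF comps_subset_PiE]) (simp add: finite_PiE)

lemma comps_bounds: "ks \<in> comps p n \<Longrightarrow> j < p \<Longrightarrow> 1 \<le> ks j \<and> ks j \<le> n"
  using comps_subset_PiE by (auto simp: PiE_def Pi_def)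

lemma sum_inverse_squares_le: "(\<Sum>a=1..n. 1 / real a ^ 2) \<le> 2"
proof -
  have telescope: "(\<Sum>a=1..n. 1 / real a ^ 2) \<le> 2 - 1 / real n" if "n \<ge> 1" for n
    using that
  proof (induction n rule: dec_induct)
    case (step n)
    have "1 / real (Suc n) ^ 2 \<le> 1 / (real n * real (Suc n))"
      using step(1) by (intro divide_left_mono) (auto simp: power2_eq_square intro!: mult_right_mono)
    also have "\<dots> = 1 / real n - 1 / real (Suc n)"
      using step(1) by (simp add: field_simps)
    finally have "1 / real (Suc n) ^ 2 \<le> 1 / real n - 1 / real (Suc n)" .
    moreover have "(\<Sum>a=1..Suc n. 1 / real a ^ 2) = (\<Sum>a=1..n. 1 / real a ^ 2) + 1 / real (Suc n) ^ 2"
      by simp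
    ultimately show ?case using step.IH by linarith
  qed simp
  show ?thesis
  proof (cases "n \<ge> 1")
    case True
    have "0 \<le> 1 / real n" by simp
    then show ?thesis using telescope[OF True] by linarith
  qed simp
qed

text \<open>A composition of \<open>n\<close> determines its \<open>j\<^sub>0\<close>-th part through the others.\<close>

lemma sum_comps_drop_part_le:
  assumes "j0 < p"
  shows "(\<Sum>ks\<in>comps p n. \<Prod>j\<in>{..<p} - {j0}. 1 / real (ks j) ^ 2) \<le> 2 ^ (p - 1)"
proof -
  define S where "S = {..<p} - {j0}"
  define g where "g = (\<lambda>a::nat. 1 / real a ^ 2)"
  have sum_split: "(\<Sum>j<p. ks j) = ks j0 + (\<Sum>j\<in>S. ks j)" for ks :: "nat \<Rightarrow> nat"
    unfolding S_def using assms by (subst sum.remove[of _ j0]) auto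
  have inj: "inj_on (\<lambda>ks. restrict ks S) (comps p n)"
  proof (rule inj_onI)
    fix ks ks' assume ks: "ks \<in> comps p n" "ks' \<in> comps p n" and eq: "restrict ks S = restrict ks' S"
    have eqS: "ks j = ks' j" if "j \<in> S" for j using eq that by (metis restrict_apply')
    have "(\<Sum>j\<in>S. ks j) = (\<Sum>j\<in>S. ks' j)" using eqS by simp
    then have "ks j0 = ks' j0"
      using ks sum_split[of ks] sum_split[of ks'] by (simp add: comps_def)
    then have "ks j = ks' j" if "j < p" for j
      using eqS that by (cases "j = j0") (auto simp: S_def)
    moreover have "ks j = ks' j" if "\<not> j < p" for j
      using ks that by (auto simp: comps_def PiE_def extensional_def)
    ultimately show "ks = ks'" by (metis ext)
  qed
  have "(\<Sum>ks\<in>comps p n. \<Prod>j\<in>S. g (ks j)) = (\<Sum>r\<in>(\<lambda>ks. restrict ks S) ` comps p n. \<Prod>j\<in>S. g (r j))"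
    using inj by (simp add: sum.reindex)
  also have "\<dots> \<le> (\<Sum>r\<in>PiE S (\<lambda>_. {1..n}). \<Prod>j\<in>S. g (r j))"
  proof (rule sum_mono2)
    show "finite (PiE S (\<lambda>_. {1..n}))" by (simp add: finite_PiE S_def)
    show "(\<lambda>ks. restrict ks S) ` comps p n \<subseteq> PiE S (\<lambda>_. {1..n})"
      using comps_bounds by (auto simp: S_def PiE_def Pi_def)
  qed (simp add: prod_nonneg g_def)
  also have "\<dots> = (\<Prod>j\<in>S. \<Sum>a=1..n. g a)"
    by (rule prod_sum_PiE[symmetric]) (auto simp: S_def)
  also have "\<dots> \<le> (\<Prod>j\<in>S. 2)"
    using sum_inverse_squares_le[of n] by (intro prod_mono) (auto simp: g_def sum_nonneg)
  also have "\<dots> = 2 ^ (p - 1)" using assms by (simp add: S_def)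
  finally show ?thesis by (simp add: S_def g_def)
qed

text \<open>Cauchy-Schwarz gives \<open>n\<^sup>2 \<le> p \<Sum>\<^sub>j k\<^sub>j\<^sup>2\<close>, and each \<open>k\<^sub>j\<^sup>2\<close> cancels one
  factor of the product.\<close>

lemma sum_comps_inverse_squares_le:
  assumes "n \<ge> 1"
  shows "(\<Sum>ks\<in>comps p n. \<Prod>j<p. 1 / real (ks j) ^ 2) \<le> 8 ^ p / real n ^ 2"
proof -
  define g where "g = (\<lambda>a::nat. 1 / real a ^ 2)"
  define D where "D = (\<lambda>ks j0. \<Prod>j\<in>{..<p} - {j0}. g (ks j))"
  have pointwise: "real n ^ 2 * (\<Prod>j<p. g (ks j)) \<le> real p * (\<Sum>j0<p. D ks j0)"
    if ks: "ks \<in> comps p n" for ks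
  proof -
    have drop: "real (ks j0) ^ 2 * (\<Prod>j<p. g (ks j)) = D ks j0" if "j0 < p" for j0
      using that comps_bounds[OF ks that] unfolding D_def
      by (subst prod.remove[of _ j0]) (auto simp: g_def)
    have "real n = (\<Sum>j<p. real (ks j))"
      using ks unfolding comps_def by (simp flip: of_nat_sum)
    then have "real n ^ 2 \<le> (\<Sum>j<p. real (ks j) ^ 2) * real p"
      using sum_squared_le_sum_of_squares[of "\<lambda>j. real (ks j)" "{..<p}"] by simp
    then have "real n ^ 2 * (\<Prod>j<p. g (ks j)) \<le> (\<Sum>j<p. real (ks j) ^ 2) * real p * (\<Prod>j<p. g (ks j))"
      by (rule mult_right_mono) (simp add: prod_nonneg g_def)
    also have "\<dots> = real p * (\<Sum>j0<p. real (ks j0) ^ 2 * (\<Prod>j<p. g (ks j)))"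
      by (simp add: sum_distrib_right sum_distrib_left mult_ac)
    finally show ?thesis using drop by simp
  qed
  have "real p * real p * 2 ^ (p - 1) \<le> (2 ^ p * 2 ^ p * 2 ^ p :: real)"
  proof -
    have "real p \<le> 2 ^ p" using less_exp[of p] by (simp add: less_imp_le)
    then show ?thesis by (intro mult_mono power_increasing) auto
  qed
  then have p_le: "real p * real p * 2 ^ (p - 1) \<le> (8 ^ p :: real)"
    by (simp add: power_mult_distrib[symmetric])
  have "real n ^ 2 * (\<Sum>ks\<in>comps p n. \<Prod>j<p. g (ks j)) \<le> (\<Sum>ks\<in>comps p n. real p * (\<Sum>j0<p. D ks j0))"
    unfolding sum_distrib_left[of "real n ^ 2"] by (intro sum_mono pointwise)
  also have "\<dots> = real p * (\<Sum>j0<p. \<Sum>ks\<in>comps p n. D ks j0)"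
    by (simp add: sum_distrib_left sum.swap[of _ "comps p n"])
  also have "\<dots> \<le> real p * (\<Sum>j0<p. 2 ^ (p - 1))"
    unfolding D_def g_def by (intro mult_left_mono sum_mono sum_comps_drop_part_le) auto
  also have "\<dots> \<le> 8 ^ p" using p_le by simp
  finally show ?thesis using assms by (simp add: g_def field_simps)
qed

lemma sum_powers_from_2_le:
  fixes y :: real
  assumes "0 \<le> y" "y \<le> 1/2"
  shows "(\<Sum>p=2..n. y ^ p) \<le> 2 * y ^ 2"
proof -
  have strengthened: "(\<Sum>p=2..n. y ^ p) \<le> 2 * y ^ 2 - 2 * y ^ (n + 1)" if "n \<ge> 1" for n
    using that
  proof (induction n rule: dec_induct)
    case (step n)
    have "(2 * y) * y ^ (n + 1) \<le> 1 * y ^ (n + 1)"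
      using assms by (intro mult_right_mono) auto
    then have "y ^ (n + 1) \<le> 2 * y ^ (n + 1) - 2 * y ^ (Suc n + 1)"
      by (simp add: algebra_simps)
    moreover have "(\<Sum>p=2..Suc n. y ^ p) = (\<Sum>p=2..n. y ^ p) + y ^ (n + 1)"
      using step(1) by (simp add: atLeastAtMostSuc_conv)
    ultimately show ?case using step.IH by linarith
  qed (simp add: power2_eq_square)
  show ?thesis
  proof (cases "n \<ge> 1")
    case True
    moreover have "0 \<le> y ^ (n + 1)" using assms by simp
    ultimately show ?thesis using strengthened[OF True] by linarith
  qed simp
qed

lemma pos_def_mat_coercive:
  fixes M :: "real^'m^'m"
  assumes "pos_def_mat M"
  shows "\<exists>\<mu>>0. \<forall>x. \<mu> * norm x ^ 2 \<le> x \<bullet> (M *v x)"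
proof -
  have "sphere (0::real^'m) 1 \<noteq> {}"
    using vector_choose_size[of 1] by (auto simp: sphere_def)
  moreover have "continuous_on (sphere 0 1) (\<lambda>x::real^'m. x \<bullet> (M *v x))"
    by (intro continuous_intros)
  ultimately obtain x0 where x0: "x0 \<in> sphere 0 1"
    and min: "\<And>y. y \<in> sphere 0 1 \<Longrightarrow> x0 \<bullet> (M *v x0) \<le> y \<bullet> (M *v y)"
    using continuous_attains_inf[OF compact_sphere] by blast
  have "x0 \<noteq> 0" using x0 by auto
  then have "x0 \<bullet> (M *v x0) > 0" using assms by (simp add: pos_def_mat_def)
  moreover have "x0 \<bullet> (M *v x0) * norm x ^ 2 \<le> x \<bullet> (M *v x)" for x
  proof (cases "x = 0")
    case False
    define u where "u = (1 / norm x) *\<^sub>R x"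
    have "x = norm x *\<^sub>R u" using False by (simp add: u_def)
    then have "x \<bullet> (M *v x) = norm x ^ 2 * (u \<bullet> (M *v u))"
      by (metis inner_scaleR_left inner_scaleR_right matrix_vector_mult_scaleR mult.assoc power2_eq_square)
    moreover have "x0 \<bullet> (M *v x0) \<le> u \<bullet> (M *v u)" using False by (intro min) (simp add: u_def)
    ultimately show ?thesis by (simp add: mult_right_mono mult.commute)
  qed simp
  ultimately show ?thesis by blast
qed

definition Re_vec :: "complex^'m \<Rightarrow> real^'m" where "Re_vec v = (\<chi> i. Re (v $ i))"
definition Im_vec :: "complex^'m \<Rightarrow> real^'m" where "Im_vec v = (\<chi> i. Im (v $ i))"

definition hermitian_form :: "real^'m^'m \<Rightarrow> complex^'m \<Rightarrow> complex" where
  "hermitian_form M v = (\<Sum>i\<in>UNIV. \<Sum>j\<in>UNIV. cnj (v $ i) * complex_of_real (M $ i $ j) * v $ j)"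

lemma hermitian_form_symmetric:
  fixes M :: "real^'m^'m"
  assumes "transpose M = M"
  shows "hermitian_form M v = complex_of_real (Re_vec v \<bullet> (M *v Re_vec v) + Im_vec v \<bullet> (M *v Im_vec v))"
proof (rule complex_eqI)
  have Mij: "M $ j $ i = M $ i $ j" for i j using assms by (metis transpose_def vec_lambda_beta)
  show "Re (hermitian_form M v) = Re (complex_of_real (Re_vec v \<bullet> (M *v Re_vec v) + Im_vec v \<bullet> (M *v Im_vec v)))"
    by (simp add: hermitian_form_def Re_vec_def Im_vec_def inner_vec_def matrix_vector_mult_def
        sum_distrib_left sum.distrib[symmetric] algebra_simps)
  have "(\<Sum>i\<in>UNIV. \<Sum>j\<in>UNIV. M $ i $ j * (Re (v $ i) * Im (v $ j))) =
        (\<Sum>i\<in>UNIV. \<Sum>j\<in>UNIV. M $ i $ j * (Im (v $ i) * Re (v $ j)))"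
    by (subst sum.swap) (simp add: Mij mult_ac)
  then show "Im (hermitian_form M v) = Im (complex_of_real (Re_vec v \<bullet> (M *v Re_vec v) + Im_vec v \<bullet> (M *v Im_vec v)))"
    by (simp add: hermitian_form_def algebra_simps sum_subtractf)
qed

lemma norm_power2_Re_Im_vec: "norm v ^ 2 = norm (Re_vec v) ^ 2 + norm (Im_vec v) ^ 2"
proof -
  have "norm v ^ 2 = (\<Sum>i\<in>UNIV. Re (v $ i) ^ 2 + Im (v $ i) ^ 2)"
    by (simp add: norm_vec_def L2_set_def sum_nonneg cmod_power2)
  then show ?thesis
    by (simp add: norm_vec_def L2_set_def sum_nonneg sum.distrib Re_vec_def Im_vec_def)
qed

lemma cmod_sum_cnj_mult_le: "cmod (\<Sum>i\<in>UNIV. cnj (v $ i) * w $ i) \<le> norm v * norm (w::complex^'m)"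
proof -
  have "cmod (\<Sum>i\<in>UNIV. cnj (v $ i) * w $ i) \<le> (\<Sum>i\<in>UNIV. \<bar>cmod (v $ i)\<bar> * \<bar>cmod (w $ i)\<bar>)"
    by (rule order_trans[OF norm_sum]) (simp add: norm_mult)
  also have "\<dots> \<le> L2_set (\<lambda>i. cmod (v $ i)) UNIV * L2_set (\<lambda>i. cmod (w $ i)) UNIV"
    by (rule L2_set_mult_ineq)
  finally show ?thesis by (simp add: norm_vec_def)
qed

lemma Dmat_quadratic_form:
  fixes \<Gamma> A :: "real^'m^'m"
  assumes "transpose \<Gamma> = \<Gamma>" and "transpose A = A"
  shows "(\<Sum>i\<in>UNIV. cnj (v $ i) * (Dmat \<Gamma> A \<epsilon> s *v v) $ i) =
     complex_of_real (\<epsilon> * (Re_vec v \<bullet> (A *v Re_vec v) + Im_vec v \<bullet> (A *v Im_vec v) - s^2 * norm v ^ 2))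
     + \<i> * complex_of_real (s * (Re_vec v \<bullet> (\<Gamma> *v Re_vec v) + Im_vec v \<bullet> (\<Gamma> *v Im_vec v)))"
proof -
  define H :: "real^'m^'m" where "H = (\<chi> i j. A $ i $ j - s^2 * (if i = j then 1 else 0))"
  have H_symmetric: "transpose H = H"
    using assms(2) unfolding H_def transpose_def by (simp add: vec_eq_iff)
  have "Dmat \<Gamma> A \<epsilon> s $ i $ j =
      complex_of_real \<epsilon> * complex_of_real (H $ i $ j) + \<i> * complex_of_real s * complex_of_real (\<Gamma> $ i $ j)" for i j
    by (simp add: Dmat_def H_def algebra_simps)
  then have split: "(\<Sum>i\<in>UNIV. cnj (v $ i) * (Dmat \<Gamma> A \<epsilon> s *v v) $ i) =
      complex_of_real \<epsilon> * hermitian_form H v + \<i> * complex_of_real s * hermitian_form \<Gamma> v"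
    by (simp add: matrix_vector_mult_def hermitian_form_def sum_distrib_left sum.distrib[symmetric] algebra_simps)
  have "(H *v x) $ i = (A *v x) $ i - s^2 * x $ i" for x i
  proof -
    have "(H *v x) $ i = (\<Sum>j\<in>UNIV. A $ i $ j * x $ j - (if i = j then s^2 * x $ j else 0))"
      unfolding H_def matrix_vector_mult_def by (simp, intro sum.cong) (auto simp: algebra_simps)
    then show ?thesis by (simp add: sum_subtractf matrix_vector_mult_def)
  qed
  then have H_mult: "H *v x = A *v x - s^2 *\<^sub>R x" for x
    by (simp add: vec_eq_iff)
  have "Re_vec v \<bullet> (H *v Re_vec v) + Im_vec v \<bullet> (H *v Im_vec v) =
      Re_vec v \<bullet> (A *v Re_vec v) + Im_vec v \<bullet> (A *v Im_vec v) - s^2 * norm v ^ 2"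
    unfolding H_mult norm_power2_Re_Im_vec[of v] by (simp add: power2_norm_eq_inner algebra_simps)
  then show ?thesis
    unfolding split hermitian_form_symmetric[OF H_symmetric] hermitian_form_symmetric[OF assms(1)] by simp
qed

lemma norm_Dmat_mult_ge:
  fixes \<Gamma> A :: "real^'m^'m"
  assumes "transpose \<Gamma> = \<Gamma>" and "transpose A = A"
    and \<Gamma>_coercive: "\<And>x. \<gamma> * norm x ^ 2 \<le> x \<bullet> (\<Gamma> *v x)"
    and A_coercive: "\<And>x. \<alpha> * norm x ^ 2 \<le> x \<bullet> (A *v x)"
    and "\<gamma> \<ge> 0"
  shows "\<gamma> * \<bar>s\<bar> * norm v \<le> norm (Dmat \<Gamma> A \<epsilon> s *v v)"
    and "\<bar>\<epsilon>\<bar> * (\<alpha> - s^2) * norm v \<le> norm (Dmat \<Gamma> A \<epsilon> s *v v)"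
proof -
  define z where "z = (\<Sum>i\<in>UNIV. cnj (v $ i) * (Dmat \<Gamma> A \<epsilon> s *v v) $ i)"
  define qA where "qA = Re_vec v \<bullet> (A *v Re_vec v) + Im_vec v \<bullet> (A *v Im_vec v)"
  define q\<Gamma> where "q\<Gamma> = Re_vec v \<bullet> (\<Gamma> *v Re_vec v) + Im_vec v \<bullet> (\<Gamma> *v Im_vec v)"
  have z: "z = complex_of_real (\<epsilon> * (qA - s^2 * norm v ^ 2)) + \<i> * complex_of_real (s * q\<Gamma>)"
    unfolding z_def qA_def q\<Gamma>_def by (rule Dmat_quadratic_form[OF assms(1,2)])
  have qA: "\<alpha> * norm v ^ 2 \<le> qA"
    using A_coercive[of "Re_vec v"] A_coercive[of "Im_vec v"]
    unfolding qA_def norm_power2_Re_Im_vec by (simp add: algebra_simps)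
  have q\<Gamma>: "\<gamma> * norm v ^ 2 \<le> q\<Gamma>"
    using \<Gamma>_coercive[of "Re_vec v"] \<Gamma>_coercive[of "Im_vec v"]
    unfolding q\<Gamma>_def norm_power2_Re_Im_vec by (simp add: algebra_simps)
  have cancel: "c * norm v \<le> norm (Dmat \<Gamma> A \<epsilon> s *v v)" if "c * norm v ^ 2 \<le> cmod z" for c
  proof (cases "v = 0")
    case False
    have "norm v * (c * norm v) \<le> norm v * norm (Dmat \<Gamma> A \<epsilon> s *v v)"
      using order_trans[OF that[unfolded z_def] cmod_sum_cnj_mult_le]
      by (simp add: power2_eq_square mult_ac)
    then show ?thesis using False by simp
  qed simp
  have "0 \<le> q\<Gamma>" using q\<Gamma> \<open>\<gamma> \<ge> 0\<close> by (meson order_trans zero_le_mult_iff zero_le_power2)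
  then have "\<gamma> * \<bar>s\<bar> * norm v ^ 2 \<le> \<bar>Im z\<bar>"
    using mult_left_mono[OF q\<Gamma> abs_ge_zero[of s]] by (simp add: z abs_mult mult_ac)
  also have "\<dots> \<le> cmod z" by (rule abs_Im_le_cmod)
  finally show "\<gamma> * \<bar>s\<bar> * norm v \<le> norm (Dmat \<Gamma> A \<epsilon> s *v v)" by (rule cancel)
  have "\<bar>\<epsilon>\<bar> * (\<alpha> - s^2) * norm v ^ 2 \<le> \<bar>\<epsilon>\<bar> * (qA - s^2 * norm v ^ 2)"
    using mult_left_mono[OF qA abs_ge_zero[of \<epsilon>]] by (simp add: algebra_simps)
  also have "\<dots> \<le> \<bar>\<epsilon>\<bar> * \<bar>qA - s^2 * norm v ^ 2\<bar>"
    by (intro mult_left_mono abs_ge_self) simp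
  also have "\<dots> = \<bar>Re z\<bar>" by (simp add: z abs_mult)
  also have "\<dots> \<le> cmod z" by (rule abs_Re_le_cmod)
  finally show "\<bar>\<epsilon>\<bar> * (\<alpha> - s^2) * norm v \<le> norm (Dmat \<Gamma> A \<epsilon> s *v v)" by (rule cancel)
qed

lemma
  fixes \<Gamma> A :: "real^'m^'m"
  assumes "transpose \<Gamma> = \<Gamma>" and "transpose A = A"
    and \<Gamma>_coercive: "\<And>x. \<gamma> * norm x ^ 2 \<le> x \<bullet> (\<Gamma> *v x)" and "\<gamma> > 0"
    and A_coercive: "\<And>x. \<alpha> * norm x ^ 2 \<le> x \<bullet> (A *v x)"
    and "s \<noteq> 0"
  shows Dmat_mult_matrix_inv: "Dmat \<Gamma> A \<epsilon> s *v (matrix_inv (Dmat \<Gamma> A \<epsilon> s) *v y) = y"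
    and norm_matrix_inv_Dmat_le: "norm (matrix_inv (Dmat \<Gamma> A \<epsilon> s) *v y) \<le> norm y / (\<gamma> * \<bar>s\<bar>)"
proof -
  define D where "D = Dmat \<Gamma> A \<epsilon> s"
  have lower: "\<gamma> * \<bar>s\<bar> * norm v \<le> norm (D *v v)" for v
    unfolding D_def using assms by (intro norm_Dmat_mult_ge(1)) auto
  have "\<gamma> * \<bar>s\<bar> > 0" using assms by simp
  have "\<forall>x. D *v x = 0 \<longrightarrow> x = 0"
  proof (intro allI impI)
    fix x assume "D *v x = 0"
    then have "\<gamma> * \<bar>s\<bar> * norm x \<le> 0" using lower[of x] by simp
    then show "x = 0" using \<open>\<gamma> * \<bar>s\<bar> > 0\<close> by (simp add: mult_le_0_iff not_le[symmetric])
  qed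
  then have "invertible D"
    using matrix_left_invertible_ker invertible_left_inverse by blast
  then have "D ** matrix_inv D = mat 1"
    unfolding invertible_def matrix_inv_def
    by (rule someI_ex[where P="\<lambda>A'. D ** A' = mat 1 \<and> A' ** D = mat 1", THEN conjunct1])
  then show inverse: "Dmat \<Gamma> A \<epsilon> s *v (matrix_inv (Dmat \<Gamma> A \<epsilon> s) *v y) = y"
    by (simp add: D_def matrix_vector_mul_assoc)
  show "norm (matrix_inv (Dmat \<Gamma> A \<epsilon> s) *v y) \<le> norm y / (\<gamma> * \<bar>s\<bar>)"
    using lower[of "matrix_inv D *v y"] \<open>\<gamma> * \<bar>s\<bar> > 0\<close>
    by (simp add: inverse D_def pos_le_divide_eq mult.commute)
qed

text \<open>Below \<open>s\<^sup>2 = \<alpha>/2\<close> the real part of \<open>D\<close> gives \<open>\<bar>\<epsilon>\<bar>\<alpha>/2\<close>, above it the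
  imaginary part gives \<open>\<gamma>\<bar>s\<bar>\<close>: this is the uniform bound on \<open>\<epsilon> D\<^sup>-\<^sup>1\<close>.\<close>

lemma norm_scaled_matrix_inv_Dmat_le:
  fixes \<Gamma> A :: "real^'m^'m"
  assumes "transpose \<Gamma> = \<Gamma>" and "transpose A = A"
    and \<Gamma>_coercive: "\<And>x. \<gamma> * norm x ^ 2 \<le> x \<bullet> (\<Gamma> *v x)" and "\<gamma> > 0"
    and A_coercive: "\<And>x. \<alpha> * norm x ^ 2 \<le> x \<bullet> (A *v x)" and "\<alpha> > 0"
    and "s \<noteq> 0" and "\<bar>\<epsilon>\<bar> \<le> 1"
  shows "\<bar>\<epsilon>\<bar> * norm (matrix_inv (Dmat \<Gamma> A \<epsilon> s) *v y) \<le> max (2/\<alpha>) (1/(\<gamma> * sqrt (\<alpha>/2))) * norm y"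
proof -
  define w where "w = matrix_inv (Dmat \<Gamma> A \<epsilon> s) *v y"
  have "\<bar>\<epsilon>\<bar> * norm w \<le> 2/\<alpha> * norm y \<or> \<bar>\<epsilon>\<bar> * norm w \<le> 1/(\<gamma> * sqrt (\<alpha>/2)) * norm y"
  proof (cases "s^2 \<le> \<alpha>/2")
    case True
    have "\<bar>\<epsilon>\<bar> * (\<alpha> - s^2) * norm w \<le> norm y"
      using norm_Dmat_mult_ge(2)[of \<Gamma> A \<gamma> \<alpha> \<epsilon> s w] Dmat_mult_matrix_inv[of \<Gamma> A \<gamma> \<alpha> s \<epsilon> y] assms
      by (simp add: w_def)
    moreover have "\<bar>\<epsilon>\<bar> * (\<alpha> / 2) * norm w \<le> \<bar>\<epsilon>\<bar> * (\<alpha> - s^2) * norm w"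
      using True by (intro mult_right_mono mult_left_mono) auto
    ultimately have "\<bar>\<epsilon>\<bar> * norm w \<le> 2 / \<alpha> * norm y"
      using \<open>\<alpha> > 0\<close> by (simp add: field_simps)
    then show ?thesis ..
  next
    case False
    then have "sqrt (\<alpha>/2) \<le> \<bar>s\<bar>" by (metis less_imp_le not_le real_sqrt_abs real_sqrt_le_mono)
    moreover have "sqrt (\<alpha>/2) > 0" using \<open>\<alpha> > 0\<close> by simp
    ultimately have "norm y / (\<gamma> * \<bar>s\<bar>) \<le> norm y / (\<gamma> * sqrt (\<alpha>/2))"
      using \<open>\<gamma> > 0\<close> by (intro divide_left_mono mult_left_mono mult_pos_pos) auto
    moreover have "norm w \<le> norm y / (\<gamma> * \<bar>s\<bar>)"
      unfolding w_def using assms by (intro norm_matrix_inv_Dmat_le) auto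
    moreover have "\<bar>\<epsilon>\<bar> * norm w \<le> norm w"
      using \<open>\<bar>\<epsilon>\<bar> \<le> 1\<close> by (simp add: mult_left_le_one_le)
    ultimately have "\<bar>\<epsilon>\<bar> * norm w \<le> 1/(\<gamma> * sqrt (\<alpha>/2)) * norm y" by simp
    then show ?thesis ..
  qed
  moreover have "2/\<alpha> * norm y \<le> max (2/\<alpha>) (1/(\<gamma> * sqrt (\<alpha>/2))) * norm y"
    and "1/(\<gamma> * sqrt (\<alpha>/2)) * norm y \<le> max (2/\<alpha>) (1/(\<gamma> * sqrt (\<alpha>/2))) * norm y"
    by (intro mult_right_mono; simp)+
  ultimately show ?thesis unfolding w_def by linarith
qed

lemma matrix_inv_Dmat_bounds:
  fixes \<Gamma> A :: "real^'m^'m"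
  assumes "pos_def_mat \<Gamma>" "pos_def_mat A"
  obtains \<gamma> c0 where "\<gamma> > 0" "c0 \<ge> 0"
    and "\<And>\<epsilon> s y. \<bar>\<epsilon>\<bar> \<le> 1 \<Longrightarrow> s \<noteq> 0 \<Longrightarrow>
        \<bar>\<epsilon>\<bar> * norm (matrix_inv (Dmat \<Gamma> A \<epsilon> s) *v y) \<le> c0 * norm y"
    and "\<And>\<epsilon> s y. s \<noteq> 0 \<Longrightarrow> norm (matrix_inv (Dmat \<Gamma> A \<epsilon> s) *v y) \<le> norm y / (\<gamma> * \<bar>s\<bar>)"
proof -
  have symmetric: "transpose \<Gamma> = \<Gamma>" "transpose A = A"
    using assms by (simp_all add: pos_def_mat_def)
  obtain \<gamma> where "\<gamma> > 0" and \<Gamma>_coercive: "\<And>x. \<gamma> * norm x ^ 2 \<le> x \<bullet> (\<Gamma> *v x)"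
    using pos_def_mat_coercive[OF assms(1)] by blast
  obtain \<alpha> where "\<alpha> > 0" and A_coercive: "\<And>x. \<alpha> * norm x ^ 2 \<le> x \<bullet> (A *v x)"
    using pos_def_mat_coercive[OF assms(2)] by blast
  show ?thesis
  proof
    show "\<gamma> > 0" by fact
    show "max (2/\<alpha>) (1/(\<gamma> * sqrt (\<alpha>/2))) \<ge> 0" using \<open>\<alpha> > 0\<close> by (simp add: le_max_iff_disj)
    show "\<bar>\<epsilon>\<bar> * norm (matrix_inv (Dmat \<Gamma> A \<epsilon> s) *v y) \<le> max (2/\<alpha>) (1/(\<gamma> * sqrt (\<alpha>/2))) * norm y"
      if "\<bar>\<epsilon>\<bar> \<le> 1" "s \<noteq> 0" for \<epsilon> s y
      using symmetric \<Gamma>_coercive \<open>\<gamma> > 0\<close> A_coercive \<open>\<alpha> > 0\<close> that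
      by (intro norm_scaled_matrix_inv_Dmat_le) auto
    show "norm (matrix_inv (Dmat \<Gamma> A \<epsilon> s) *v y) \<le> norm y / (\<gamma> * \<bar>s\<bar>)" if "s \<noteq> 0" for \<epsilon> s y
      using symmetric \<Gamma>_coercive \<open>\<gamma> > 0\<close> A_coercive that
      by (intro norm_matrix_inv_Dmat_le) auto
  qed
qed

lemma uhist_eq_useq:
  "uhist \<Gamma> A \<omega> f G \<epsilon> \<zeta> n j = (if 1 \<le> j \<and> j \<le> n then useq \<Gamma> A \<omega> f G \<epsilon> \<zeta> j else (\<lambda>_. 0))"
  by (induction n arbitrary: j) (auto simp: useq_def)

lemma useq_zero_freq:
  "useq \<Gamma> A \<omega> f G \<epsilon> \<zeta> k 0 = (if k = 1 then (\<chi> i. complex_of_real (\<zeta> $ i)) else 0)"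
  by (cases k) (auto simp: useq_def ustep_def)

lemma useq_one:
  "\<nu> \<noteq> 0 \<Longrightarrow> useq \<Gamma> A \<omega> f G \<epsilon> \<zeta> 1 \<nu> =
     matrix_inv (Dmat \<Gamma> A \<epsilon> (dotZ \<omega> \<nu>)) *v (complex_of_real \<epsilon> *s f \<nu>)"
  by (simp add: useq_def ustep_def)

lemma Gapply_cong: "(\<And>j. j < p \<Longrightarrow> ys j = ys' j) \<Longrightarrow> Gapply G p ys = Gapply G p ys'"
  unfolding Gapply_def by (intro arg_cong[where f=vec_lambda] ext sum.cong prod.cong) auto

lemma useq_Suc:
  assumes "n \<ge> 1" "\<nu> \<noteq> 0"
  shows "useq \<Gamma> A \<omega> f G \<epsilon> \<zeta> (Suc n) \<nu> =
    matrix_inv (Dmat \<Gamma> A \<epsilon> (dotZ \<omega> \<nu>)) *v ((- complex_of_real \<epsilon>) *s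
      (\<Sum>p=2..n. \<Sum>ks\<in>comps p n.
         infsum (\<lambda>\<nu>s. Gapply G p (\<lambda>j. useq \<Gamma> A \<omega> f G \<epsilon> \<zeta> (ks j) (\<nu>s j))) (splits p \<nu>)))"
proof -
  have "Gapply G p (\<lambda>j. uhist \<Gamma> A \<omega> f G \<epsilon> \<zeta> n (ks j) (\<nu>s j)) =
        Gapply G p (\<lambda>j. useq \<Gamma> A \<omega> f G \<epsilon> \<zeta> (ks j) (\<nu>s j))" if "ks \<in> comps p n" for p ks \<nu>s
    using comps_bounds[OF that] by (intro Gapply_cong) (simp add: uhist_eq_useq)
  then show ?thesis
    using assms by (simp add: useq_def ustep_def cong: sum.cong)
qed

lemma norm_smult_cvec: "norm ((c::complex) *s (x::complex^'m)) = cmod c * norm x"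
  by (simp add: norm_vec_def norm_mult L2_set_right_distrib)

lemma norm_Gapply_le:
  fixes G :: "'m::finite \<Rightarrow> 'm list \<Rightarrow> real"
  assumes G_le: "\<And>i xs. \<bar>G i xs\<bar> \<le> \<Delta> / \<rho> ^ length xs"
  shows "norm (Gapply G p ys) \<le> real CARD('m) ^ (p+1) * (\<Delta> / \<rho> ^ p) * (\<Prod>j<p. norm (ys j))"
proof -
  define L where "L = {xs::'m list. length xs = p}"
  have "card L = CARD('m) ^ p"
    unfolding L_def using card_lists_length_eq[of "UNIV::'m set" p] by simp
  have term_le: "cmod (complex_of_real (G i xs) * (\<Prod>j<p. ys j $ (xs ! j))) \<le> \<Delta> / \<rho> ^ p * (\<Prod>j<p. norm (ys j))"
    if "xs \<in> L" for i xs
  proof -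
    have "\<bar>G i xs\<bar> \<le> \<Delta> / \<rho> ^ p" using G_le[of i xs] that by (simp add: L_def)
    moreover have "(\<Prod>j<p. cmod (ys j $ (xs ! j))) \<le> (\<Prod>j<p. norm (ys j))"
      by (intro prod_mono) (auto intro: Finite_Cartesian_Product.norm_nth_le)
    ultimately have "\<bar>G i xs\<bar> * (\<Prod>j<p. cmod (ys j $ (xs ! j))) \<le> \<Delta> / \<rho> ^ p * (\<Prod>j<p. norm (ys j))"
      by (intro mult_mono) (auto simp: prod_nonneg intro: order_trans[OF abs_ge_zero])
    then show ?thesis by (simp add: norm_mult prod_norm)
  qed
  have component_le: "cmod (Gapply G p ys $ i) \<le> real CARD('m) ^ p * (\<Delta> / \<rho> ^ p * (\<Prod>j<p. norm (ys j)))" for i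
  proof -
    have "cmod (Gapply G p ys $ i) \<le> (\<Sum>xs\<in>L. \<Delta> / \<rho> ^ p * (\<Prod>j<p. norm (ys j)))"
      unfolding Gapply_def L_def[symmetric] vec_lambda_beta
      by (rule order_trans[OF norm_sum], intro sum_mono term_le)
    then show ?thesis using \<open>card L = CARD('m) ^ p\<close> by simp
  qed
  have "norm (Gapply G p ys) \<le> (\<Sum>i\<in>UNIV. cmod (Gapply G p ys $ i))"
    by (simp add: norm_vec_def L2_set_le_sum)
  also have "\<dots> \<le> (\<Sum>i\<in>(UNIV::'m set). real CARD('m) ^ p * (\<Delta> / \<rho> ^ p * (\<Prod>j<p. norm (ys j))))"
    by (intro sum_mono component_le)
  finally have "norm (Gapply G p ys) \<le> real CARD('m) * (real CARD('m) ^ p * (\<Delta> / \<rho> ^ p * (\<Prod>j<p. norm (ys j))))"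
    by simp
  then show ?thesis by (simp add: mult_ac)
qed

lemma exp_normZ_le_prod_splits:
  assumes "a \<ge> 0" "\<nu>s \<in> splits p \<nu>"
  shows "exp (a * normZ \<nu>) \<le> (\<Prod>j<p. exp (a * normZ (\<nu>s j)))"
proof -
  have "normZ \<nu> \<le> (\<Sum>j<p. normZ (\<nu>s j))"
    using assms(2) normZ_sum_le[of \<nu>s "{..<p}"] by (simp add: splits_def)
  then have "exp (a * normZ \<nu>) \<le> exp (\<Sum>j<p. a * normZ (\<nu>s j))"
    using assms(1) by (simp add: sum_distrib_left[symmetric] mult_left_mono)
  then show ?thesis by (simp add: exp_sum)
qed

lemma norm_infsum_mult_le:
  fixes T :: "'a \<Rightarrow> 'b::banach"
  assumes "h summable_on X" "\<And>x. x \<in> X \<Longrightarrow> norm (T x) * w \<le> h x" "w > 0"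
  shows "norm (infsum T X) * w \<le> infsum h X"
proof -
  have "(\<lambda>x. norm (T x) * w) summable_on X"
    using assms by (intro summable_on_comparison_test[OF assms(1)]) auto
  then have "(\<lambda>x. norm (T x) * w * (1 / w)) summable_on X"
    by (rule summable_on_cmult_left)
  then have norm_summable: "(\<lambda>x. norm (T x)) summable_on X"
    using \<open>w > 0\<close> by simp
  have "norm (infsum T X) * w \<le> infsum (\<lambda>x. norm (T x)) X * w"
    using norm_infsum_bound[OF norm_summable] \<open>w > 0\<close> by simp
  also have "\<dots> = infsum (\<lambda>x. norm (T x) * w) X"
    by (rule infsum_cmult_left[symmetric]) (simp add: norm_summable)
  also have "\<dots> \<le> infsum h X"
    using assms norm_summable by (intro infsum_mono summable_on_cmult_left) auto
  finally show ?thesis .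
qed

lemma sum_comps_majorant_le:
  fixes c0 M \<Delta> \<rho> Q R :: real
  assumes "c0 \<ge> 0" "M \<ge> 0" "\<Delta> \<ge> 0" "\<rho> > 0" "Q > 0" "R > 0"
    and small: "8 * M * Q / \<rho> \<le> 1/2" and large: "512 * c0 * M^3 * \<Delta> * Q / \<rho>^2 \<le> R"
    and "n \<ge> 1"
  shows "c0 * (\<Sum>p=2..n. \<Sum>ks\<in>comps p n. M^(p+1) * (\<Delta>/\<rho>^p) * (\<Prod>j<p. Q * R^(ks j) / real (ks j)^2))
         \<le> Q * R^(Suc n) / real (Suc n)^2"
proof -
  define y where "y = 8 * M * Q / \<rho>"
  have "y \<ge> 0" using assms by (simp add: y_def)
  have inner: "(\<Sum>ks\<in>comps p n. M^(p+1) * (\<Delta>/\<rho>^p) * (\<Prod>j<p. Q * R^(ks j) / real (ks j)^2))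
      \<le> M * \<Delta> * R^n / real n^2 * y^p" for p
  proof -
    have "(\<Prod>j<p. Q * R^(ks j) / real (ks j)^2) = Q^p * R^n * (\<Prod>j<p. 1 / real (ks j)^2)"
      if "ks \<in> comps p n" for ks
      using that by (simp add: prod.distrib comps_def power_sum[symmetric] divide_inverse)
    then have "(\<Sum>ks\<in>comps p n. M^(p+1) * (\<Delta>/\<rho>^p) * (\<Prod>j<p. Q * R^(ks j) / real (ks j)^2))
        = (\<Sum>ks\<in>comps p n. M^(p+1) * (\<Delta>/\<rho>^p) * Q^p * R^n * (\<Prod>j<p. 1 / real (ks j)^2))"
      by (intro sum.cong refl) (simp add: mult_ac)
    also have "\<dots> = M^(p+1) * (\<Delta>/\<rho>^p) * Q^p * R^n * (\<Sum>ks\<in>comps p n. \<Prod>j<p. 1 / real (ks j)^2)"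
      by (rule sum_distrib_left[symmetric])
    also have "\<dots> \<le> M^(p+1) * (\<Delta>/\<rho>^p) * Q^p * R^n * (8^p / real n^2)"
      using assms by (intro mult_left_mono sum_comps_inverse_squares_le) auto
    also have "\<dots> = M * \<Delta> * R^n / real n^2 * y^p"
      using assms by (simp add: y_def field_simps)
    finally show ?thesis .
  qed
  have "real (Suc n)^2 \<le> (2 * real n)^2"
    using assms by (intro power_mono) auto
  then have n_ratio: "1 / real n^2 \<le> 4 / real (Suc n)^2"
    using assms by (simp add: field_simps)
  have "c0 * (\<Sum>p=2..n. \<Sum>ks\<in>comps p n. M^(p+1) * (\<Delta>/\<rho>^p) * (\<Prod>j<p. Q * R^(ks j) / real (ks j)^2))
     \<le> c0 * (\<Sum>p=2..n. M * \<Delta> * R^n / real n^2 * y^p)"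
    using assms by (intro mult_left_mono sum_mono inner) auto
  also have "\<dots> = c0 * (M * \<Delta> * R^n / real n^2) * (\<Sum>p=2..n. y^p)"
    by (simp add: sum_distrib_left mult.assoc)
  also have "\<dots> \<le> c0 * (M * \<Delta> * R^n / real n^2) * (2 * y^2)"
    using assms small \<open>y \<ge> 0\<close> by (intro mult_left_mono sum_powers_from_2_le) (auto simp: y_def)
  also have "\<dots> = (128 * c0 * M^3 * \<Delta> * Q / \<rho>^2) * (Q * R^n) * (1 / real n^2)"
    using assms by (simp add: y_def power2_eq_square power3_eq_cube field_simps)
  also have "\<dots> \<le> (128 * c0 * M^3 * \<Delta> * Q / \<rho>^2) * (Q * R^n) * (4 / real (Suc n)^2)"
    using assms n_ratio by (intro mult_left_mono) auto
  also have "\<dots> = (512 * c0 * M^3 * \<Delta> * Q / \<rho>^2) * (Q * R^n / real (Suc n)^2)"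
    by (simp add: field_simps)
  also have "\<dots> \<le> R * (Q * R^n / real (Suc n)^2)"
    using assms large by (intro mult_right_mono) auto
  finally show ?thesis by (simp add: mult_ac)
qed

definition weighted_norm :: "real \<Rightarrow> (int^'d \<Rightarrow> complex^'m) \<Rightarrow> int^'d \<Rightarrow> real" where
  "weighted_norm a u \<nu> = norm (u \<nu>) * exp (a * normZ \<nu>)"

definition weighted_l1_le :: "real \<Rightarrow> (int^'d \<Rightarrow> complex^'m) \<Rightarrow> real \<Rightarrow> bool" where
  "weighted_l1_le a u b \<longleftrightarrow> weighted_norm a u summable_on UNIV \<and> infsum (weighted_norm a u) UNIV \<le> b"

lemma weighted_norm_nonneg: "weighted_norm a u \<nu> \<ge> 0"
  by (simp add: weighted_norm_def)

lemma norm_le_of_weighted_l1_le: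
  assumes "weighted_l1_le a u b"
  shows "norm (u \<nu>) \<le> b * exp (- a * normZ \<nu>)"
proof -
  have "weighted_norm a u \<nu> \<le> infsum (weighted_norm a u) UNIV"
    using assms finite_sum_le_infsum[of "weighted_norm a u" UNIV "{\<nu>}"]
    by (simp add: weighted_l1_le_def weighted_norm_nonneg)
  then have "weighted_norm a u \<nu> \<le> b"
    using assms by (simp add: weighted_l1_le_def)
  then have "norm (u \<nu>) * exp (a * normZ \<nu>) * exp (- a * normZ \<nu>) \<le> b * exp (- a * normZ \<nu>)"
    by (simp add: weighted_norm_def)
  then show ?thesis by (simp add: mult.assoc exp_add[symmetric])
qed

lemma weighted_l1_le_of_has_sum:
  assumes "\<And>\<nu>. weighted_norm a u \<nu> \<le> h \<nu>" and "(h has_sum b) UNIV"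
  shows "weighted_l1_le a u b"
proof -
  have "weighted_norm a u summable_on UNIV"
    using has_sum_imp_summable[OF assms(2)] assms(1)
    by (rule summable_on_comparison_test) (simp add: weighted_norm_nonneg)
  moreover have "infsum (weighted_norm a u) UNIV \<le> b"
    using has_sum_mono[OF has_sum_infsum[OF calculation] assms(2) assms(1)] .
  ultimately show ?thesis by (simp add: weighted_l1_le_def)
qed

lemma weighted_norm_convolution_le:
  fixes G :: "'m::finite \<Rightarrow> 'm list \<Rightarrow> real" and v :: "nat \<Rightarrow> int^'d \<Rightarrow> complex^'m"
  assumes G_le: "\<And>i xs. \<bar>G i xs\<bar> \<le> \<Delta> / \<rho> ^ length xs"
    and "a \<ge> 0" "\<Delta> \<ge> 0" "\<rho> > 0"
    and summable: "\<And>j. j < p \<Longrightarrow> weighted_norm a (v j) summable_on UNIV"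
  shows "norm (infsum (\<lambda>\<nu>s. Gapply G p (\<lambda>j. v j (\<nu>s j))) (splits p \<nu>)) * exp (a * normZ \<nu>)
    \<le> real CARD('m) ^ (p+1) * (\<Delta> / \<rho>^p) * infsum (\<lambda>\<nu>s. \<Prod>j<p. weighted_norm a (v j) (\<nu>s j)) (splits p \<nu>)"
proof -
  define C where "C = real CARD('m) ^ (p+1) * (\<Delta> / \<rho>^p)"
  define P where "P \<nu>s = (\<Prod>j<p. weighted_norm a (v j) (\<nu>s j))" for \<nu>s :: "nat \<Rightarrow> int^'d"
  define W where "W \<mu> = exp (a * normZ \<mu>)" for \<mu> :: "int^'d"
  have W_ge: "W \<mu> \<ge> 1" for \<mu> using \<open>a \<ge> 0\<close> normZ_nonneg[of \<mu>] by (simp add: W_def)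
  have P_summable: "P summable_on splits p \<nu>"
    unfolding P_def using summable by (intro summable_on_splits_prod) (auto simp: weighted_norm_nonneg)
  have "norm (Gapply G p (\<lambda>j. v j (\<nu>s j))) * W \<nu> \<le> C * P \<nu>s" if "\<nu>s \<in> splits p \<nu>" for \<nu>s
  proof -
    have "W \<nu> \<le> (\<Prod>j<p. W (\<nu>s j))"
      unfolding W_def using \<open>a \<ge> 0\<close> that by (rule exp_normZ_le_prod_splits)
    with norm_Gapply_le[OF G_le]
    have "norm (Gapply G p (\<lambda>j. v j (\<nu>s j))) * W \<nu> \<le> C * (\<Prod>j<p. norm (v j (\<nu>s j))) * (\<Prod>j<p. W (\<nu>s j))"
      using W_ge \<open>\<Delta> \<ge> 0\<close> \<open>\<rho> > 0\<close> by (intro mult_mono) (auto simp: C_def prod_nonneg order_trans[OF zero_le_one])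
    then show ?thesis by (simp add: P_def weighted_norm_def W_def prod.distrib mult_ac)
  qed
  then have "norm (infsum (\<lambda>\<nu>s. Gapply G p (\<lambda>j. v j (\<nu>s j))) (splits p \<nu>)) * W \<nu>
      \<le> infsum (\<lambda>\<nu>s. C * P \<nu>s) (splits p \<nu>)"
    using P_summable W_ge[of \<nu>] by (intro norm_infsum_mult_le summable_on_cmult_right) auto
  also have "\<dots> = C * infsum P (splits p \<nu>)"
    using P_summable by (rule infsum_cmult_right)
  finally show ?thesis unfolding C_def P_def W_def .
qed

lemma weighted_norm_useq_Suc_le:
  fixes \<Gamma> A :: "real^'m^'m" and \<omega> :: "real^'d" and G :: "'m \<Rightarrow> 'm list \<Rightarrow> real"
  assumes Dinv: "\<And>\<nu> y. \<nu> \<noteq> 0 \<Longrightarrow> \<bar>\<epsilon>\<bar> * norm (matrix_inv (Dmat \<Gamma> A \<epsilon> (dotZ \<omega> \<nu>)) *v y) \<le> c0 * norm y"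
    and G_le: "\<And>i xs. \<bar>G i xs\<bar> \<le> \<Delta> / \<rho> ^ length xs"
    and "a \<ge> 0" "c0 \<ge> 0" "\<Delta> \<ge> 0" "\<rho> > 0" "n \<ge> 1"
    and summable: "\<And>i. 1 \<le> i \<Longrightarrow> i \<le> n \<Longrightarrow> weighted_norm a (useq \<Gamma> A \<omega> f G \<epsilon> \<zeta> i) summable_on UNIV"
  shows "weighted_norm a (useq \<Gamma> A \<omega> f G \<epsilon> \<zeta> (Suc n)) \<nu> \<le> c0 * (\<Sum>p=2..n. \<Sum>ks\<in>comps p n.
           real CARD('m) ^ (p+1) * (\<Delta> / \<rho>^p) *
           infsum (\<lambda>\<nu>s. \<Prod>j<p. weighted_norm a (useq \<Gamma> A \<omega> f G \<epsilon> \<zeta> (ks j)) (\<nu>s j)) (splits p \<nu>))"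
    (is "_ \<le> c0 * ?majorant")
proof -
  define u where "u = useq \<Gamma> A \<omega> f G \<epsilon> \<zeta>"
  have "0 \<le> ?majorant"
    using assms
    by (intro sum_nonneg mult_nonneg_nonneg divide_nonneg_nonneg infsum_nonneg prod_nonneg weighted_norm_nonneg) auto
  moreover have "weighted_norm a (u (Suc n)) \<nu> \<le> c0 * ?majorant" if "\<nu> \<noteq> 0"
  proof -
    define X where
      "X = (\<Sum>p=2..n. \<Sum>ks\<in>comps p n. infsum (\<lambda>\<nu>s. Gapply G p (\<lambda>j. u (ks j) (\<nu>s j))) (splits p \<nu>))"
    have "u (Suc n) \<nu> = (- complex_of_real \<epsilon>) *s (matrix_inv (Dmat \<Gamma> A \<epsilon> (dotZ \<omega> \<nu>)) *v X)"
      unfolding u_def X_def useq_Suc[OF \<open>n \<ge> 1\<close> that] by (rule vector_scalar_commute)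
    then have "norm (u (Suc n) \<nu>) = \<bar>\<epsilon>\<bar> * norm (matrix_inv (Dmat \<Gamma> A \<epsilon> (dotZ \<omega> \<nu>)) *v X)"
      by (simp only: norm_smult_cvec) simp
    also have "\<dots> \<le> c0 * norm X" by (rule Dinv[OF that])
    finally have u_le: "weighted_norm a (u (Suc n)) \<nu> \<le> c0 * (norm X * exp (a * normZ \<nu>))"
      by (simp add: weighted_norm_def mult_right_mono mult.assoc)
    have "norm X * exp (a * normZ \<nu>) \<le> (\<Sum>p=2..n. \<Sum>ks\<in>comps p n.
        norm (infsum (\<lambda>\<nu>s. Gapply G p (\<lambda>j. u (ks j) (\<nu>s j))) (splits p \<nu>))) * exp (a * normZ \<nu>)"
      unfolding X_def by (intro mult_right_mono order_trans[OF norm_sum] sum_mono norm_sum) auto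
    also have "\<dots> \<le> ?majorant"
      unfolding sum_distrib_right u_def using summable comps_bounds
      by (intro sum_mono weighted_norm_convolution_le[OF G_le \<open>a \<ge> 0\<close> \<open>\<Delta> \<ge> 0\<close> \<open>\<rho> > 0\<close>]) auto
    finally show ?thesis
      using u_le \<open>c0 \<ge> 0\<close> unfolding u_def by (meson mult_left_mono order_trans)
  qed
  ultimately show ?thesis
    using useq_zero_freq[of \<Gamma> A \<omega> f G \<epsilon> \<zeta> "Suc n"] \<open>c0 \<ge> 0\<close> \<open>n \<ge> 1\<close>
    by (cases "\<nu> = 0") (auto simp: u_def weighted_norm_def)
qed

lemma weighted_l1_useq_Suc_le:
  fixes \<Gamma> A :: "real^'m^'m" and \<omega> :: "real^'d" and G :: "'m \<Rightarrow> 'm list \<Rightarrow> real"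
  assumes Dinv: "\<And>\<nu> y. \<nu> \<noteq> 0 \<Longrightarrow> \<bar>\<epsilon>\<bar> * norm (matrix_inv (Dmat \<Gamma> A \<epsilon> (dotZ \<omega> \<nu>)) *v y) \<le> c0 * norm y"
    and G_le: "\<And>i xs. \<bar>G i xs\<bar> \<le> \<Delta> / \<rho> ^ length xs"
    and "a \<ge> 0" "c0 \<ge> 0" "\<Delta> \<ge> 0" "\<rho> > 0" "n \<ge> 1"
    and prev: "\<And>i. 1 \<le> i \<Longrightarrow> i \<le> n \<Longrightarrow> weighted_l1_le a (useq \<Gamma> A \<omega> f G \<epsilon> \<zeta> i) (b i)"
  shows "weighted_l1_le a (useq \<Gamma> A \<omega> f G \<epsilon> \<zeta> (Suc n))
           (c0 * (\<Sum>p=2..n. \<Sum>ks\<in>comps p n. real CARD('m) ^ (p+1) * (\<Delta> / \<rho>^p) * (\<Prod>j<p. b (ks j))))"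
proof -
  define g where "g i = weighted_norm a (useq \<Gamma> A \<omega> f G \<epsilon> \<zeta> i)" for i
  define C where "C p = real CARD('m) ^ (p+1) * (\<Delta> / \<rho>^p)" for p :: nat
  define majorant where "majorant \<nu> = c0 * (\<Sum>p=2..n. \<Sum>ks\<in>comps p n.
      C p * infsum (\<lambda>\<nu>s. \<Prod>j<p. g (ks j) (\<nu>s j)) (splits p \<nu>))" for \<nu>
  have g_bound: "g i summable_on UNIV \<and> infsum (g i) UNIV \<le> b i" if "1 \<le> i" "i \<le> n" for i
    using prev[OF that] by (simp add: g_def weighted_l1_le_def)
  have "(majorant has_sum c0 * (\<Sum>p=2..n. \<Sum>ks\<in>comps p n. C p * (\<Prod>j<p. infsum (g (ks j)) UNIV))) UNIV"
    unfolding majorant_def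
  proof (intro has_sum_cmult_right has_sum_sum finite_comps has_sum_infsum_splits_prod)
    fix p ks j assume "ks \<in> comps p n" "j < p"
    then show "g (ks j) summable_on UNIV" using g_bound comps_bounds by blast
  qed (auto simp: g_def weighted_norm_nonneg)
  moreover have "g (Suc n) \<nu> \<le> majorant \<nu>" for \<nu>
    unfolding g_def majorant_def C_def
    using assms g_bound by (intro weighted_norm_useq_Suc_le) (auto simp: g_def)
  ultimately have "weighted_l1_le a (useq \<Gamma> A \<omega> f G \<epsilon> \<zeta> (Suc n))
      (c0 * (\<Sum>p=2..n. \<Sum>ks\<in>comps p n. C p * (\<Prod>j<p. infsum (g (ks j)) UNIV)))"
    by (intro weighted_l1_le_of_has_sum) (auto simp: g_def)
  moreover have "c0 * (\<Sum>p=2..n. \<Sum>ks\<in>comps p n. C p * (\<Prod>j<p. infsum (g (ks j)) UNIV))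
      \<le> c0 * (\<Sum>p=2..n. \<Sum>ks\<in>comps p n. C p * (\<Prod>j<p. b (ks j)))"
    using assms g_bound comps_bounds
    by (intro mult_left_mono sum_mono prod_mono) (auto simp: C_def g_def weighted_norm_nonneg infsum_nonneg)
  ultimately show ?thesis by (auto simp: weighted_l1_le_def C_def)
qed

lemma weighted_l1_useq_le:
  fixes \<Gamma> A :: "real^'m^'m" and \<omega> :: "real^'d" and G :: "'m \<Rightarrow> 'm list \<Rightarrow> real"
  assumes Dinv: "\<And>\<nu> y. \<nu> \<noteq> 0 \<Longrightarrow> \<bar>\<epsilon>\<bar> * norm (matrix_inv (Dmat \<Gamma> A \<epsilon> (dotZ \<omega> \<nu>)) *v y) \<le> c0 * norm y"
    and G_le: "\<And>i xs. \<bar>G i xs\<bar> \<le> \<Delta> / \<rho> ^ length xs"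
    and "a \<ge> 0" "c0 \<ge> 0" "\<Delta> \<ge> 0" "\<rho> > 0" "Q > 0" "R > 0"
    and small: "8 * real CARD('m) * Q / \<rho> \<le> 1/2"
    and large: "512 * c0 * real CARD('m)^3 * \<Delta> * Q / \<rho>^2 \<le> R"
    and first_order: "weighted_l1_le a (useq \<Gamma> A \<omega> f G \<epsilon> \<zeta> 1) (Q * R)"
    and "k \<ge> 1"
  shows "weighted_l1_le a (useq \<Gamma> A \<omega> f G \<epsilon> \<zeta> k) (Q * R^k / real k^2)"
  using \<open>k \<ge> 1\<close>
proof (induction k rule: less_induct)
  case (less k)
  show ?case
  proof (cases "k = 1")
    case True
    then show ?thesis using first_order by simp
  next
    case False
    then obtain n where k: "k = Suc n" and "n \<ge> 1" using less.prems by (cases k) auto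
    have "weighted_l1_le a (useq \<Gamma> A \<omega> f G \<epsilon> \<zeta> k) (c0 * (\<Sum>p=2..n. \<Sum>ks\<in>comps p n.
        real CARD('m) ^ (p+1) * (\<Delta> / \<rho>^p) * (\<Prod>j<p. Q * R^(ks j) / real (ks j)^2)))"
      unfolding k using assms \<open>n \<ge> 1\<close> less.IH k by (intro weighted_l1_useq_Suc_le) auto
    moreover have "c0 * (\<Sum>p=2..n. \<Sum>ks\<in>comps p n. real CARD('m) ^ (p+1) * (\<Delta> / \<rho>^p) *
        (\<Prod>j<p. Q * R^(ks j) / real (ks j)^2)) \<le> Q * R^k / real k^2"
      unfolding k using assms \<open>n \<ge> 1\<close> by (intro sum_comps_majorant_le) auto
    ultimately show ?thesis by (auto simp: weighted_l1_le_def)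
  qed
qed

lemma norm_of_real_vec: "norm ((\<chi> i. complex_of_real (x $ i)) :: complex^'m) = norm x"
  by (simp add: norm_vec_def)

lemma norm_mult_exp_le_of_decay:
  fixes f :: "int^'d \<Rightarrow> complex^'m"
  assumes "\<And>\<nu> i. cmod (f \<nu> $ i) \<le> \<Phi> * exp (- \<xi> * normZ \<nu>)"
  shows "norm (f \<nu>) * exp (\<xi>/2 * normZ \<nu>) \<le> real CARD('m) * \<Phi> * exp (- (\<xi>/2) * normZ \<nu>)"
proof -
  have "norm (f \<nu>) \<le> (\<Sum>i\<in>UNIV. cmod (f \<nu> $ i))"
    by (simp add: norm_vec_def L2_set_le_sum)
  also have "\<dots> \<le> (\<Sum>i\<in>(UNIV::'m set). \<Phi> * exp (- \<xi> * normZ \<nu>))"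
    by (intro sum_mono assms)
  finally have "norm (f \<nu>) * exp (\<xi>/2 * normZ \<nu>) \<le> real CARD('m) * \<Phi> * exp (- \<xi> * normZ \<nu>) * exp (\<xi>/2 * normZ \<nu>)"
    by (intro mult_right_mono) simp_all
  then show ?thesis by (simp add: mult.assoc exp_add[symmetric])
qed

lemma weighted_l1_useq_one_le:
  fixes \<Gamma> A :: "real^'m^'m" and \<omega> :: "real^'d" and f :: "int^'d \<Rightarrow> complex^'m"
  assumes Dinv_far: "\<And>\<nu> y. \<nu> \<noteq> 0 \<Longrightarrow> \<nu> \<notin> F \<Longrightarrow>
        \<bar>\<epsilon>\<bar> * norm (matrix_inv (Dmat \<Gamma> A \<epsilon> (dotZ \<omega> \<nu>)) *v y) \<le> c0 * norm y"
    and Dinv_near: "\<And>\<nu> y. \<nu> \<noteq> 0 \<Longrightarrow> \<nu> \<in> F \<Longrightarrow>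
        \<bar>\<epsilon>\<bar> * norm (matrix_inv (Dmat \<Gamma> A \<epsilon> (dotZ \<omega> \<nu>)) *v y) \<le> \<eta> * norm y"
    and f_decay: "\<And>\<nu> i. cmod (f \<nu> $ i) \<le> \<Phi> * exp (- \<xi> * normZ \<nu>)"
    and "\<xi> > 0" "c0 \<ge> 0" "\<eta> \<ge> 0" "\<Phi> \<ge> 0"
  defines "E \<equiv> \<lambda>\<nu>::int^'d. exp (- (\<xi>/2) * normZ \<nu>)"
  shows "weighted_l1_le (\<xi>/2) (useq \<Gamma> A \<omega> f G \<epsilon> \<zeta> 1)
           (norm \<zeta> + \<eta> * (real CARD('m) * \<Phi>) * infsum E UNIV + c0 * (real CARD('m) * \<Phi>) * infsum E (- F))"
proof (rule weighted_l1_le_of_has_sum)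
  define M where "M = real CARD('m) * \<Phi>"
  have "M \<ge> 0" using \<open>\<Phi> \<ge> 0\<close> by (simp add: M_def)
  have E_summable: "E summable_on UNIV"
    unfolding E_def using summable_on_exp_neg_normZ[of "\<xi>/2"] \<open>\<xi> > 0\<close> by simp
  have "((\<lambda>\<nu>. if \<nu> = 0 then norm \<zeta> else 0) has_sum norm \<zeta>) UNIV"
    by (rule has_sum_finite_neutralI[of "{0}"]) auto
  moreover have "((\<lambda>\<nu>. if \<nu> \<in> F then 0 else E \<nu>) has_sum infsum E (- F)) UNIV"
    using summable_on_subset_banach[OF E_summable, of "- F"]
    by (subst has_sum_cong_neutral[where T="- F" and g=E]) auto
  ultimately show "((\<lambda>\<nu>. (if \<nu> = 0 then norm \<zeta> else 0) + \<eta> * M * E \<nu> + c0 * M * (if \<nu> \<in> F then 0 else E \<nu>))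
      has_sum (norm \<zeta> + \<eta> * M * infsum E UNIV + c0 * M * infsum E (- F))) UNIV"
    using E_summable by (intro has_sum_add has_sum_cmult_right) auto
  fix \<nu> :: "int^'d"
  have E_nonneg: "0 \<le> \<eta> * M * E \<nu>" "0 \<le> c0 * M * E \<nu>"
    using \<open>M \<ge> 0\<close> assms by (simp_all add: E_def)
  have f_le: "norm (f \<nu>) * exp (\<xi>/2 * normZ \<nu>) \<le> M * E \<nu>"
    unfolding M_def E_def using f_decay by (rule norm_mult_exp_le_of_decay)
  show "weighted_norm (\<xi>/2) (useq \<Gamma> A \<omega> f G \<epsilon> \<zeta> 1) \<nu> \<le>
      (if \<nu> = 0 then norm \<zeta> else 0) + \<eta> * M * E \<nu> + c0 * M * (if \<nu> \<in> F then 0 else E \<nu>)"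
  proof (cases "\<nu> = 0")
    case True
    then show ?thesis using E_nonneg by (simp add: weighted_norm_def useq_zero_freq norm_of_real_vec)
  next
    case False
    define D where "D = matrix_inv (Dmat \<Gamma> A \<epsilon> (dotZ \<omega> \<nu>))"
    have "norm (useq \<Gamma> A \<omega> f G \<epsilon> \<zeta> 1 \<nu>) = \<bar>\<epsilon>\<bar> * norm (D *v f \<nu>)"
      unfolding useq_one[OF False] vector_scalar_commute norm_smult_cvec D_def by simp
    also have "\<dots> \<le> (if \<nu> \<in> F then \<eta> else c0) * norm (f \<nu>)"
      using Dinv_far[OF False, of "f \<nu>"] Dinv_near[OF False, of "f \<nu>"] by (simp add: D_def)
    finally have "weighted_norm (\<xi>/2) (useq \<Gamma> A \<omega> f G \<epsilon> \<zeta> 1) \<nu> \<le>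
        (if \<nu> \<in> F then \<eta> else c0) * (norm (f \<nu>) * exp (\<xi>/2 * normZ \<nu>))"
      unfolding weighted_norm_def mult.assoc[symmetric] by (rule mult_right_mono) simp
    also have "\<dots> \<le> (if \<nu> \<in> F then \<eta> else c0) * (M * E \<nu>)"
      using assms f_le by (intro mult_left_mono) auto
    finally show ?thesis using False E_nonneg by (simp add: mult.assoc split: if_splits)
  qed
qed

lemma finite_tail_infsum_le:
  fixes f :: "'a \<Rightarrow> real"
  assumes "f summable_on UNIV" "\<delta> > 0"
  shows "\<exists>F. finite F \<and> infsum f (- F) \<le> \<delta>"
proof -
  obtain F where "finite F" and F: "dist (sum f F) (infsum f UNIV) \<le> \<delta>"
    using infsum_finite_approximation[OF assms] by blast
  have "infsum f (F \<union> - F) = infsum f F + infsum f (- F)"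
    by (rule infsum_Un_disjoint) (use \<open>finite F\<close> assms in \<open>auto intro: summable_on_subset_banach\<close>)
  then have "infsum f UNIV = infsum f F + infsum f (- F)" by simp
  then show ?thesis using F \<open>finite F\<close> by (auto simp: dist_real_def)
qed

lemma small_divisors_bounded_on_finite:
  assumes "finite F" and "\<And>\<nu>. \<nu> \<noteq> 0 \<Longrightarrow> dotZ \<omega> \<nu> \<noteq> 0"
  shows "\<exists>\<sigma>>0. \<forall>\<nu>\<in>F. \<nu> \<noteq> 0 \<longrightarrow> \<sigma> \<le> \<bar>dotZ \<omega> \<nu>\<bar>"
proof -
  define \<sigma> where "\<sigma> = Min (insert 1 ((\<lambda>\<nu>. \<bar>dotZ \<omega> \<nu>\<bar>) ` (F - {0})))"
  have "\<sigma> > 0" unfolding \<sigma>_def using assms by (subst Min_gr_iff) auto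
  moreover have "\<sigma> \<le> \<bar>dotZ \<omega> \<nu>\<bar>" if "\<nu> \<in> F" "\<nu> \<noteq> 0" for \<nu>
    unfolding \<sigma>_def using assms that by (intro Min_le) auto
  ultimately show ?thesis by blast
qed

lemma weighted_l1_useq_one_small:
  fixes \<Gamma> A :: "real^'m^'m" and \<omega> :: "real^'d" and f :: "int^'d \<Rightarrow> complex^'m"
  assumes omega_indep: "\<And>\<nu>. \<nu> \<noteq> 0 \<Longrightarrow> dotZ \<omega> \<nu> \<noteq> 0"
    and Dinv_uniform: "\<And>\<epsilon> \<nu> y. \<bar>\<epsilon>\<bar> \<le> 1 \<Longrightarrow> \<nu> \<noteq> 0 \<Longrightarrow>
        \<bar>\<epsilon>\<bar> * norm (matrix_inv (Dmat \<Gamma> A \<epsilon> (dotZ \<omega> \<nu>)) *v y) \<le> c0 * norm y"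
    and Dinv_freq: "\<And>\<epsilon> \<nu> y. \<nu> \<noteq> 0 \<Longrightarrow>
        norm (matrix_inv (Dmat \<Gamma> A \<epsilon> (dotZ \<omega> \<nu>)) *v y) \<le> norm y / (\<gamma> * \<bar>dotZ \<omega> \<nu>\<bar>)"
    and f_decay: "\<And>\<nu> i. cmod (f \<nu> $ i) \<le> \<Phi> * exp (- \<xi> * normZ \<nu>)"
    and "\<xi> > 0" "\<Phi> \<ge> 0" "\<gamma> > 0" "c0 \<ge> 0" "\<tau> > 0"
  shows "\<exists>\<epsilon>b>0. \<epsilon>b \<le> 1 \<and> (\<exists>\<zeta>b>0. \<forall>\<epsilon> \<zeta>. \<bar>\<epsilon>\<bar> < \<epsilon>b \<longrightarrow> norm \<zeta> < \<zeta>b \<longrightarrow>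
           weighted_l1_le (\<xi>/2) (useq \<Gamma> A \<omega> f G \<epsilon> \<zeta> 1) \<tau>)"
proof -
  define E where "E \<nu> = exp (- (\<xi>/2) * normZ \<nu>)" for \<nu> :: "int^'d"
  define M where "M = real CARD('m) * \<Phi>"
  have "M \<ge> 0" using \<open>\<Phi> \<ge> 0\<close> by (simp add: M_def)
  have E_summable: "E summable_on UNIV"
    unfolding E_def using summable_on_exp_neg_normZ[of "\<xi>/2"] \<open>\<xi> > 0\<close> by simp
  have "0 \<le> infsum E UNIV" by (intro infsum_nonneg) (simp add: E_def)
  have "c0 * M + 1 > 0" using \<open>c0 \<ge> 0\<close> \<open>M \<ge> 0\<close> by (simp add: add_nonneg_pos)
  then have "\<tau> / (4 * (c0 * M + 1)) > 0" using \<open>\<tau> > 0\<close> by simp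
  then obtain F where "finite F" and tail: "infsum E (- F) \<le> \<tau> / (4 * (c0 * M + 1))"
    using finite_tail_infsum_le[OF E_summable] by blast
  obtain \<sigma> where "\<sigma> > 0" and \<sigma>_le: "\<And>\<nu>. \<nu> \<in> F \<Longrightarrow> \<nu> \<noteq> 0 \<Longrightarrow> \<sigma> \<le> \<bar>dotZ \<omega> \<nu>\<bar>"
    using small_divisors_bounded_on_finite[OF \<open>finite F\<close> omega_indep] by blast
  define \<epsilon>b where "\<epsilon>b = min 1 (\<tau> * \<gamma> * \<sigma> / (4 * (M * infsum E UNIV + 1)))"
  have "M * infsum E UNIV + 1 > 0"
    using \<open>M \<ge> 0\<close> \<open>0 \<le> infsum E UNIV\<close> by (simp add: add_nonneg_pos)
  then have "\<epsilon>b > 0"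
    using assms \<open>\<sigma> > 0\<close> unfolding \<epsilon>b_def min_less_iff_conj by (intro conjI divide_pos_pos mult_pos_pos) auto
  moreover have "weighted_l1_le (\<xi>/2) (useq \<Gamma> A \<omega> f G \<epsilon> \<zeta> 1) \<tau>"
    if \<epsilon>: "\<bar>\<epsilon>\<bar> < \<epsilon>b" and \<zeta>: "norm \<zeta> < \<tau> / 2" for \<epsilon> \<zeta>
  proof -
    define \<eta> where "\<eta> = \<bar>\<epsilon>\<bar> / (\<gamma> * \<sigma>)"
    have near: "\<bar>\<epsilon>\<bar> * norm (matrix_inv (Dmat \<Gamma> A \<epsilon> (dotZ \<omega> \<nu>)) *v y) \<le> \<eta> * norm y"
      if "\<nu> \<noteq> 0" "\<nu> \<in> F" for \<nu> y
    proof -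
      have "norm y / (\<gamma> * \<bar>dotZ \<omega> \<nu>\<bar>) \<le> norm y / (\<gamma> * \<sigma>)"
        using \<sigma>_le[OF that(2,1)] \<open>\<sigma> > 0\<close> \<open>\<gamma> > 0\<close> by (intro divide_left_mono mult_left_mono) auto
      then have "norm (matrix_inv (Dmat \<Gamma> A \<epsilon> (dotZ \<omega> \<nu>)) *v y) \<le> norm y / (\<gamma> * \<sigma>)"
        using Dinv_freq[OF that(1), of \<epsilon> y] by linarith
      then have "\<bar>\<epsilon>\<bar> * norm (matrix_inv (Dmat \<Gamma> A \<epsilon> (dotZ \<omega> \<nu>)) *v y) \<le> \<bar>\<epsilon>\<bar> * (norm y / (\<gamma> * \<sigma>))"
        by (rule mult_left_mono) simp
      then show ?thesis by (simp add: \<eta>_def)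
    qed
    have "\<eta> * M * infsum E UNIV \<le> \<tau> / 4"
    proof -
      define T where "T = M * infsum E UNIV"
      have "T \<ge> 0" using \<open>M \<ge> 0\<close> \<open>0 \<le> infsum E UNIV\<close> by (simp add: T_def)
      then have "T + 1 > 0" by simp
      have "\<bar>\<epsilon>\<bar> * T \<le> \<epsilon>b * (T + 1)"
        using \<epsilon> \<open>T \<ge> 0\<close> by (intro mult_mono) auto
      also have "\<dots> \<le> \<tau> * \<gamma> * \<sigma> / (4 * (T + 1)) * (T + 1)"
        using \<open>T + 1 > 0\<close> by (intro mult_right_mono) (simp_all add: \<epsilon>b_def T_def)
      also have "\<dots> = \<tau> / 4 * (\<gamma> * \<sigma>)"
        using \<open>T + 1 > 0\<close> by (simp add: field_simps)
      finally show ?thesis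
        using \<open>\<gamma> > 0\<close> \<open>\<sigma> > 0\<close> by (simp add: \<eta>_def T_def pos_divide_le_eq mult_ac)
    qed
    moreover have "c0 * M * infsum E (- F) \<le> \<tau> / 4"
    proof -
      have "c0 * M * infsum E (- F) \<le> (c0 * M + 1) * (\<tau> / (4 * (c0 * M + 1)))"
        using tail assms \<open>M \<ge> 0\<close> by (intro mult_mono infsum_nonneg) (auto simp: E_def)
      also have "\<dots> = \<tau> / 4" using \<open>c0 * M + 1 > 0\<close> by (simp add: field_simps)
      finally show ?thesis .
    qed
    moreover have "weighted_l1_le (\<xi>/2) (useq \<Gamma> A \<omega> f G \<epsilon> \<zeta> 1)
        (norm \<zeta> + \<eta> * M * infsum E UNIV + c0 * M * infsum E (- F))"
      unfolding M_def E_def using assms \<epsilon> near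
      by (intro weighted_l1_useq_one_le) (auto simp: \<epsilon>b_def \<eta>_def \<open>\<sigma> > 0\<close> less_imp_le)
    ultimately show ?thesis using \<zeta> by (auto simp: weighted_l1_le_def)
  qed
  ultimately show ?thesis
    using \<open>\<tau> > 0\<close> by (intro exI[of _ \<epsilon>b] conjI exI[of _ "\<tau> / 2"]) (auto simp: \<epsilon>b_def)
qed

lemma useq_exponential_bound:
  fixes \<Gamma> A :: "real^'m^'m" and \<omega> :: "real^'d" and f :: "int^'d \<Rightarrow> complex^'m"
    and G :: "'m \<Rightarrow> 'm list \<Rightarrow> real"
  assumes omega_indep: "\<And>\<nu>. \<nu> \<noteq> 0 \<Longrightarrow> dotZ \<omega> \<nu> \<noteq> 0"
    and Dinv_uniform: "\<And>\<epsilon> \<nu> y. \<bar>\<epsilon>\<bar> \<le> 1 \<Longrightarrow> \<nu> \<noteq> 0 \<Longrightarrow>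
        \<bar>\<epsilon>\<bar> * norm (matrix_inv (Dmat \<Gamma> A \<epsilon> (dotZ \<omega> \<nu>)) *v y) \<le> c0 * norm y"
    and Dinv_freq: "\<And>\<epsilon> \<nu> y. \<nu> \<noteq> 0 \<Longrightarrow>
        norm (matrix_inv (Dmat \<Gamma> A \<epsilon> (dotZ \<omega> \<nu>)) *v y) \<le> norm y / (\<gamma> * \<bar>dotZ \<omega> \<nu>\<bar>)"
    and G_le: "\<And>i xs. \<bar>G i xs\<bar> \<le> \<Delta> / \<rho> ^ length xs"
    and f_decay: "\<And>\<nu> i. cmod (f \<nu> $ i) \<le> \<Phi> * exp (- \<xi> * normZ \<nu>)"
    and "\<xi> > 0" "\<Phi> \<ge> 0" "\<gamma> > 0" "c0 \<ge> 0" "\<Delta> \<ge> 0" "\<rho> > 0" "B > 0"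
  shows "\<exists>\<epsilon>b>0. \<exists>\<zeta>b>0. \<forall>\<epsilon> \<zeta> k \<nu>. \<bar>\<epsilon>\<bar> < \<epsilon>b \<longrightarrow> norm \<zeta> < \<zeta>b \<longrightarrow> k \<ge> 1 \<longrightarrow>
           norm (useq \<Gamma> A \<omega> f G \<epsilon> \<zeta> k \<nu>) \<le> B * B ^ k * exp (- \<xi> * normZ \<nu> / 2)"
proof -
  define M where "M = real CARD('m)"
  define \<kappa> where "\<kappa> = 512 * c0 * M^3 * \<Delta> / \<rho>^2 + 1"
  have "M \<ge> 1" "\<kappa> \<ge> 1" using assms by (simp_all add: M_def \<kappa>_def)
  define Q where "Q = min (B / \<kappa>) (\<rho> / (16 * M))"
  define R where "R = \<kappa> * Q"
  have "Q > 0" "R > 0" using assms \<open>M \<ge> 1\<close> \<open>\<kappa> \<ge> 1\<close> by (simp_all add: Q_def R_def)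
  have "Q \<le> B / \<kappa>" by (simp add: Q_def)
  then have "R \<le> B" using mult_left_mono[of Q "B / \<kappa>" \<kappa>] \<open>\<kappa> \<ge> 1\<close> by (simp add: R_def)
  have "Q \<le> R" using \<open>\<kappa> \<ge> 1\<close> \<open>Q > 0\<close> by (simp add: R_def)
  have small: "8 * M * Q / \<rho> \<le> 1/2"
  proof -
    have "Q \<le> \<rho> / (16 * M)" by (simp add: Q_def)
    then show ?thesis using \<open>\<rho> > 0\<close> \<open>M \<ge> 1\<close> by (simp add: field_simps)
  qed
  have large: "512 * c0 * M^3 * \<Delta> * Q / \<rho>^2 \<le> R"
    using \<open>Q > 0\<close> by (simp add: R_def \<kappa>_def field_simps)
  have "Q * R > 0" using \<open>Q > 0\<close> \<open>R > 0\<close> by simp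
  then obtain \<epsilon>b \<zeta>b where "\<epsilon>b > 0" "\<epsilon>b \<le> 1" "\<zeta>b > 0" and first_order:
      "\<And>\<epsilon> \<zeta>. \<bar>\<epsilon>\<bar> < \<epsilon>b \<Longrightarrow> norm \<zeta> < \<zeta>b \<Longrightarrow> weighted_l1_le (\<xi>/2) (useq \<Gamma> A \<omega> f G \<epsilon> \<zeta> 1) (Q * R)"
    using weighted_l1_useq_one_small[OF omega_indep Dinv_uniform Dinv_freq f_decay
        \<open>\<xi> > 0\<close> \<open>\<Phi> \<ge> 0\<close> \<open>\<gamma> > 0\<close> \<open>c0 \<ge> 0\<close>] by blast
  have bound: "norm (useq \<Gamma> A \<omega> f G \<epsilon> \<zeta> k \<nu>) \<le> Q * R^k / real k^2 * exp (- (\<xi>/2) * normZ \<nu>)"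
    if "\<bar>\<epsilon>\<bar> < \<epsilon>b" "norm \<zeta> < \<zeta>b" "k \<ge> 1" for \<epsilon> \<zeta> k \<nu>
  proof (intro norm_le_of_weighted_l1_le weighted_l1_useq_le[OF _ G_le])
    show "\<bar>\<epsilon>\<bar> * norm (matrix_inv (Dmat \<Gamma> A \<epsilon> (dotZ \<omega> \<nu>')) *v y) \<le> c0 * norm y" if "\<nu>' \<noteq> 0" for \<nu>' y
      using Dinv_uniform \<open>\<bar>\<epsilon>\<bar> < \<epsilon>b\<close> \<open>\<epsilon>b \<le> 1\<close> that by simp
  qed (use assms that first_order small large \<open>Q > 0\<close> \<open>R > 0\<close> in \<open>auto simp: M_def\<close>)
  have majorant_le: "Q * R^k / real k^2 \<le> B * B^k" if "k \<ge> 1" for k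
  proof -
    have "Q * R^k / real k^2 \<le> Q * R^k"
      using that \<open>Q > 0\<close> \<open>R > 0\<close> by (simp add: divide_le_eq_1 field_simps)
    also have "\<dots> \<le> B * B^k"
      using \<open>R \<le> B\<close> \<open>Q \<le> R\<close> \<open>Q > 0\<close> \<open>R > 0\<close> by (intro mult_mono power_mono) auto
    finally show ?thesis .
  qed
  have "norm (useq \<Gamma> A \<omega> f G \<epsilon> \<zeta> k \<nu>) \<le> B * B ^ k * exp (- \<xi> * normZ \<nu> / 2)"
    if "\<bar>\<epsilon>\<bar> < \<epsilon>b" "norm \<zeta> < \<zeta>b" "k \<ge> 1" for \<epsilon> \<zeta> k \<nu>
    using order_trans[OF bound[OF that] mult_right_mono[OF majorant_le[OF that(3)]]] by simp
  then show ?thesis using \<open>\<epsilon>b > 0\<close> \<open>\<zeta>b > 0\<close> by blast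
qed

theorem lemma4p1:
  fixes \<Gamma> A :: "real^'m::finite^'m"
    and \<omega> :: "real^'d::finite"
    and f :: "int^'d \<Rightarrow> complex^'m"
    and G :: "'m \<Rightarrow> 'm list \<Rightarrow> real"
    and \<xi> \<Phi> \<rho> \<Delta> :: real
  assumes omega_indep: "\<And>\<nu>. \<nu> \<noteq> 0 \<Longrightarrow> dotZ \<omega> \<nu> \<noteq> 0"
    and Gamma_pd: "pos_def_mat \<Gamma>"
    and f_real: "\<And>\<nu> i. f (-\<nu>) $ i = cnj (f \<nu> $ i)"
    and f_decay: "\<And>\<nu> i. cmod (f \<nu> $ i) \<le> \<Phi> * exp (- \<xi> * normZ \<nu>)"
    and xi_pos: "\<xi> > 0" and Phi_pos: "\<Phi> > 0"
    and G_sym: "\<And>i xs ys. mset xs = mset ys \<Longrightarrow> G i xs = G i ys"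
    and G_grad: "\<And>i j xs. G i (j # xs) = G j (i # xs)"
    and G0: "\<And>i. complex_of_real (G i []) = f 0 $ i"
    and A_def: "\<And>i j. A $ i $ j = G i [j]"
    and A_pd: "pos_def_mat A"
    and G_bound: "\<And>i xs. \<bar>G i xs\<bar> \<le> \<Delta> * \<rho> powi (- int (length xs))"
    and rho_pos: "\<rho> > 0" and Delta_pos: "\<Delta> > 0"
  shows "let \<kappa>\<^sub>1 = min_eig (matrix_sqrt \<Gamma>);
             b\<^sub>1 = min_eig (matrix_inv (matrix_sqrt \<Gamma>) ** A ** matrix_inv (matrix_sqrt \<Gamma>));
             C\<^sub>0 = real (CARD('m))^2 / \<rho> * Max {\<Phi>, 1, 2 * \<Delta> / (\<kappa>\<^sub>1^2 * b\<^sub>1)}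
         in \<exists>K\<^sub>0 K\<^sub>1. K\<^sub>0 > 0 \<and> K\<^sub>1 > 0 \<and>
            (\<forall>B. 0 < B \<and> B < C\<^sub>0 \<longrightarrow>
               (\<exists>\<epsilon>b > 0. \<exists>\<zeta>b > 0. \<forall>\<epsilon> (\<zeta>::real^'m) k \<nu>.
                  \<bar>\<epsilon>\<bar> < \<epsilon>b \<longrightarrow> norm \<zeta> < \<zeta>b \<longrightarrow> k \<ge> 1 \<longrightarrow> \<nu> \<noteq> 0 \<longrightarrow>
                  norm (useq \<Gamma> A \<omega> f G \<epsilon> \<zeta> k \<nu>)
                    \<le> (K\<^sub>0 * B) * (K\<^sub>1 * B) ^ k * exp (- \<xi> * normZ \<nu> / 2)))"
proof -
  obtain \<gamma> c0 where "\<gamma> > 0" "c0 \<ge> 0"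
    and Dinv_uniform: "\<And>\<epsilon> s y. \<bar>\<epsilon>\<bar> \<le> 1 \<Longrightarrow> s \<noteq> 0 \<Longrightarrow>
        \<bar>\<epsilon>\<bar> * norm (matrix_inv (Dmat \<Gamma> A \<epsilon> s) *v y) \<le> c0 * norm y"
    and Dinv_freq: "\<And>\<epsilon> s y. s \<noteq> 0 \<Longrightarrow>
        norm (matrix_inv (Dmat \<Gamma> A \<epsilon> s) *v y) \<le> norm y / (\<gamma> * \<bar>s\<bar>)"
    using matrix_inv_Dmat_bounds[OF Gamma_pd A_pd] by blast
  have G_le: "\<bar>G i xs\<bar> \<le> \<Delta> / \<rho> ^ length xs" for i xs
    using G_bound[of i xs] by (simp add: power_int_minus divide_inverse)
  have all_B: "\<forall>B. 0 < B \<longrightarrow> (\<exists>\<epsilon>b>0. \<exists>\<zeta>b>0. \<forall>\<epsilon> \<zeta> k \<nu>. \<bar>\<epsilon>\<bar> < \<epsilon>b \<longrightarrow> norm \<zeta> < \<zeta>b \<longrightarrow> k \<ge> 1 \<longrightarrow>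
      \<nu> \<noteq> 0 \<longrightarrow> norm (useq \<Gamma> A \<omega> f G \<epsilon> \<zeta> k \<nu>) \<le> (1 * B) * (1 * B) ^ k * exp (- \<xi> * normZ \<nu> / 2))"
  proof (intro allI impI)
    fix B :: real
    assume "0 < B"
    from useq_exponential_bound[where \<Gamma>=\<Gamma> and A=A and \<omega>=\<omega> and f=f and G=G and \<gamma>=\<gamma>,
        OF omega_indep Dinv_uniform[OF _ omega_indep] Dinv_freq[OF omega_indep] G_le f_decay xi_pos
        less_imp_le[OF Phi_pos] \<open>\<gamma> > 0\<close> \<open>c0 \<ge> 0\<close> less_imp_le[OF Delta_pos] rho_pos this]
    show "\<exists>\<epsilon>b>0. \<exists>\<zeta>b>0. \<forall>\<epsilon> \<zeta> k \<nu>. \<bar>\<epsilon>\<bar> < \<epsilon>b \<longrightarrow> norm \<zeta> < \<zeta>b \<longrightarrow> k \<ge> 1 \<longrightarrow>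
      \<nu> \<noteq> 0 \<longrightarrow> norm (useq \<Gamma> A \<omega> f G \<epsilon> \<zeta> k \<nu>) \<le> (1 * B) * (1 * B) ^ k * exp (- \<xi> * normZ \<nu> / 2)"
      by (simp only: mult_1_left) blast
  qed
  show ?thesis
    unfolding Let_def
    by (rule exI[of _ 1], rule exI[of _ 1], intro conjI zero_less_one allI impI) (erule conjE, erule all_B[rule_format])
qed

end
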